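(* A $\mathtt{dCBN}$ term $M$ is $\mathtt{dCBN}$-meaningful if and only if $\mathrm{nf}(\mathcal T^n(M))\neq\emptyset$.
   Context: \textbf{dCBN.} Terms $M,N::=x\mid\lambda x.M\mid MN\mid M[N/x]$ ($M[N/x]$ explicit substitution binding $x$, $M\{N/x\}$ capture-avoiding substitution); list contexts $L::=\square\mid L[N/x]$. $\to_n$ is the closure under all contexts of $L\langle\lambda x.M\rangle N\mapsto L\langle M[N/x]\rangle$ and $M[N/x]\mapsto M\{N/x\}$. Testing contexts $T::=\square\mid TN\mid(\lambda x.T)N$. $M$ is $\mathtt{dCBN}$-meaningful if there is a testing context $T$ with $T\langle M\rangle\to_n^*\lambda x.x$. \textbf{Resource calculus.} Resource terms $m,n::=x\mid\lambda x.m\mid mn\mid m[n/x]\mid\mathrm{der}\,m\mid[m_1,\dots,m_k]$ ($k\ge0$ multisets); $l::=\square\mid l[n/x]$. Reduction (to a resource term or zero $\emptyset$), closed under all contexts: $\mathrm{der}(l\langle[m]\rangle)\to l\langle m\rangle$; $\mathrm{der}(l\langle[m_1,\dots,m_k]\rangle)\to\emptyset$ if $k\ne1$; $l\langle\lambda x.m\rangle n\to l\langle m[n/x]\rangle$; $m[l\langle[n_1,\dots,n_k]\rangle/x]\to l\langle m\{n_{\sigma(1)}/x_1,\dots,n_{\sigma(k)}/x_k\}\rangle$ for each permutation $\sigma$ when $x_1,\dots,x_k$ are exactly the free occurrences of $x$ in $m$, else $\to\emptyset$. \textbf{dCBN Taylor expansion.} $x\sqsubset_n x$; $\lambda x.m\sqsubset_n\lambda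 x.M$ if $m\sqsubset_n M$; $m[n_1,\dots,n_k]\sqsubset_n MN$ and $m[[n_1,\dots,n_k]/x]\sqsubset_n M[N/x]$ ($k\ge0$) if $m\sqsubset_n M$ and all $n_i\sqsubset_n N$. $\mathcal T^n(M)=\{m\mid m\sqsubset_n M\}$; $\mathrm{nf}(\mathcal T^n(M))$ is the set of normal resource terms $p$ with $m\to^*p$ for some $m\in\mathcal T^n(M)$. *)

theory Defs
  imports Main "HOL-Library.Multiset"
begin

text \<open>Variables are de Bruijn indices. DLam M binds index 0 in M; DES M N is the explicit
  substitution M[N/x], binding index 0 in M (not in N).\<close>

datatype dterm = DVar nat | DLam dterm | DApp dterm dterm | DES dterm dterm

primrec dlift :: "nat \<Rightarrow> nat \<Rightarrow> dterm \<Rightarrow> dterm" where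
  "dlift k c (DVar i) = (if i < c then DVar i else DVar (i + k))"
| "dlift k c (DLam M) = DLam (dlift k (Suc c) M)"
| "dlift k c (DApp M N) = DApp (dlift k c M) (dlift k c N)"
| "dlift k c (DES M N) = DES (dlift k (Suc c) M) (dlift k c N)"

text \<open>Capture-avoiding meta-substitution M{N/j}: index j replaced by N (N lives in the
  context of depth j), indices above j decremented.\<close>
primrec dsubst :: "dterm \<Rightarrow> nat \<Rightarrow> dterm \<Rightarrow> dterm" where
  "dsubst (DVar i) j N = (if i < j then DVar i else if i = j then N else DVar (i - 1))"
| "dsubst (DLam M) j N = DLam (dsubst M (Suc j) (dlift 1 0 N))"
| "dsubst (DApp M1 M2) j N = DApp (dsubst M1 j N) (dsubst M2 j N)"
| "dsubst (DES M1 M2) j N = DES (dsubst M1 (Suc j) (dlift 1 0 N)) (dsubst M2 j N)"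

text \<open>List contexts L ::= [] | L[N/x]; the list head is the outermost substitution.\<close>
primrec dplugL :: "dterm list \<Rightarrow> dterm \<Rightarrow> dterm" where
  "dplugL [] M = M"
| "dplugL (N # Ns) M = DES (dplugL Ns M) N"

inductive nstep :: "dterm \<Rightarrow> dterm \<Rightarrow> bool" where
  dB: "nstep (DApp (dplugL Ls (DLam M)) N) (dplugL Ls (DES M (dlift (length Ls) 0 N)))"
| ls: "nstep (DES M N) (dsubst M 0 N)"
| lam: "nstep M M' \<Longrightarrow> nstep (DLam M) (DLam M')"
| appL: "nstep M M' \<Longrightarrow> nstep (DApp M N) (DApp M' N)"
| appR: "nstep N N' \<Longrightarrow> nstep (DApp M N) (DApp M N')"
| esL: "nstep M M' \<Longrightarrow> nstep (DES M N) (DES M' N)"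
| esR: "nstep N N' \<Longrightarrow> nstep (DES M N) (DES M N')"

text \<open>Testing contexts T ::= [] | T N | (\<lambda>x.T) N (plugging may capture).\<close>
datatype tctx = THole | TApp tctx dterm | TLamApp tctx dterm

primrec tplug :: "tctx \<Rightarrow> dterm \<Rightarrow> dterm" where
  "tplug THole M = M"
| "tplug (TApp T N) M = DApp (tplug T M) N"
| "tplug (TLamApp T N) M = DApp (DLam (tplug T M)) N"

definition dCBN_meaningful :: "dterm \<Rightarrow> bool" where
  "dCBN_meaningful M \<longleftrightarrow> (\<exists>T. nstep\<^sup>*\<^sup>* (tplug T M) (DLam (DVar 0)))"

datatype rterm = RVar nat | RLam rterm | RApp rterm rterm | RES rterm rterm
  | RDer rterm | RBag "rterm multiset"

primrec rlift :: "nat \<Rightarrow> nat \<Rightarrow> rterm \<Rightarrow> rterm" where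
  "rlift k c (RVar i) = (if i < c then RVar i else RVar (i + k))"
| "rlift k c (RLam m) = RLam (rlift k (Suc c) m)"
| "rlift k c (RApp m n) = RApp (rlift k c m) (rlift k c n)"
| "rlift k c (RES m n) = RES (rlift k (Suc c) m) (rlift k c n)"
| "rlift k c (RDer m) = RDer (rlift k c m)"
| "rlift k c (RBag B) = RBag (image_mset (rlift k c) B)"

primrec occ :: "nat \<Rightarrow> rterm \<Rightarrow> nat" where
  "occ k (RVar i) = (if i = k then 1 else 0)"
| "occ k (RLam m) = occ (Suc k) m"
| "occ k (RApp m n) = occ k m + occ k n"
| "occ k (RES m n) = occ (Suc k) m + occ k n"
| "occ k (RDer m) = occ k m"
| "occ k (RBag B) = sum_mset (image_mset (occ k) B)"

text \<open>Linear substitution: lsub k m ns m' holds iff m' is obtained from m by replacing the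
  free occurrences of index k bijectively by the elements of the multiset ns (which live in
  the context of depth k), decrementing the free indices above k. Ranging over all
  splittings of ns realises all permutations \<sigma>.\<close>
inductive lsub :: "nat \<Rightarrow> rterm \<Rightarrow> rterm multiset \<Rightarrow> rterm \<Rightarrow> bool"
  and lsub_bag :: "nat \<Rightarrow> rterm multiset \<Rightarrow> rterm multiset \<Rightarrow> rterm multiset \<Rightarrow> bool" where
  var_eq: "lsub k (RVar k) {#n#} n"
| var_lt: "i < k \<Longrightarrow> lsub k (RVar i) {#} (RVar i)"
| var_gt: "i > k \<Longrightarrow> lsub k (RVar i) {#} (RVar (i - 1))"
| lam: "lsub (Suc k) m (image_mset (rlift 1 0) ns) m' \<Longrightarrow> lsub k (RLam m) ns (RLam m')"
| app: "lsub k m ns1 m' \<Longrightarrow> lsub k n ns2 n' \<Longrightarrow> lsub k (RApp m n) (ns1 + ns2) (RApp m' n')"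
| es: "lsub (Suc k) m (image_mset (rlift 1 0) ns1) m' \<Longrightarrow> lsub k n ns2 n'
      \<Longrightarrow> lsub k (RES m n) (ns1 + ns2) (RES m' n')"
| der: "lsub k m ns m' \<Longrightarrow> lsub k (RDer m) ns (RDer m')"
| bag: "lsub_bag k B ns B' \<Longrightarrow> lsub k (RBag B) ns (RBag B')"
| bag_empty: "lsub_bag k {#} {#} {#}"
| bag_add: "lsub k m ns1 m' \<Longrightarrow> lsub_bag k B ns2 B'
      \<Longrightarrow> lsub_bag k (add_mset m B) (ns1 + ns2) (add_mset m' B')"

primrec rplugL :: "rterm list \<Rightarrow> rterm \<Rightarrow> rterm" where
  "rplugL [] m = m"
| "rplugL (n # ns) m = RES (rplugL ns m) n"

text \<open>One-step reduction to a resource term (Some t) or to zero (None); contexts are linear,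
  so zero is absorbing.\<close>
inductive rstep :: "rterm \<Rightarrow> rterm option \<Rightarrow> bool" where
  der_one: "rstep (RDer (rplugL ls (RBag {#m#}))) (Some (rplugL ls m))"
| der_zero: "size B \<noteq> 1 \<Longrightarrow> rstep (RDer (rplugL ls (RBag B))) None"
| beta: "rstep (RApp (rplugL ls (RLam m)) n) (Some (rplugL ls (RES m (rlift (length ls) 0 n))))"
| subs: "lsub 0 (rlift (length ls) 1 m) B m' \<Longrightarrow>
     rstep (RES m (rplugL ls (RBag B))) (Some (rplugL ls m'))"
| subs_zero: "occ 0 m \<noteq> size B \<Longrightarrow> rstep (RES m (rplugL ls (RBag B))) None"
| c_lam: "rstep m r \<Longrightarrow> rstep (RLam m) (map_option RLam r)"
| c_appL: "rstep m r \<Longrightarrow> rstep (RApp m n) (map_option (\<lambda>m'. RApp m' n) r)"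
| c_appR: "rstep n r \<Longrightarrow> rstep (RApp m n) (map_option (\<lambda>n'. RApp m n') r)"
| c_esL: "rstep m r \<Longrightarrow> rstep (RES m n) (map_option (\<lambda>m'. RES m' n) r)"
| c_esR: "rstep n r \<Longrightarrow> rstep (RES m n) (map_option (\<lambda>n'. RES m n') r)"
| c_der: "rstep m r \<Longrightarrow> rstep (RDer m) (map_option RDer r)"
| c_bag: "rstep m r \<Longrightarrow> rstep (RBag (add_mset m B)) (map_option (\<lambda>m'. RBag (add_mset m' B)) r)"

definition rred :: "rterm \<Rightarrow> rterm \<Rightarrow> bool" where
  "rred m n \<longleftrightarrow> rstep m (Some n)"

definition rnormal :: "rterm \<Rightarrow> bool" where
  "rnormal p \<longleftrightarrow> (\<nexists>r. rstep p r)"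

inductive taylor_n :: "rterm \<Rightarrow> dterm \<Rightarrow> bool" where
  var: "taylor_n (RVar x) (DVar x)"
| lam: "taylor_n m M \<Longrightarrow> taylor_n (RLam m) (DLam M)"
| app: "taylor_n m M \<Longrightarrow> (\<forall>n\<in>#B. taylor_n n N) \<Longrightarrow> taylor_n (RApp m (RBag B)) (DApp M N)"
| es: "taylor_n m M \<Longrightarrow> (\<forall>n\<in>#B. taylor_n n N) \<Longrightarrow> taylor_n (RES m (RBag B)) (DES M N)"

definition Taylor_n :: "dterm \<Rightarrow> rterm set" where
  "Taylor_n M = {m. taylor_n m M}"

definition nf_set :: "rterm set \<Rightarrow> rterm set" where
  "nf_set S = {p. rnormal p \<and> (\<exists>m\<in>S. rred\<^sup>*\<^sup>* m p)}"

end

(* We use non-idempotent intersection types for resource terms. Typing is linear: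
   a variable is typed only in a singleton context and the contexts of subterms are added, so the
   number of occurrences of a variable always matches the size of the bag substituted for it.
   Hence a redex of a typed term can always be fired into a typed term (subject reduction), and
   since resource steps decrease size, typed terms normalise. Conversely, typing is preserved
   backwards along the reduction of terms shaped like Taylor expansions (subject expansion), and
   normal forms of that shape are typable. So nf(T(M)) is non-empty iff some element of T(M) is
   typable.

   If T<M> reduces to \<lambda>x.x, then some element of T(T<M>) is typable, because every element of
   the expansion of a reduct is a resource reduct of an element of the expansion of the term;
   the typing restricts to an element of T(M). Conversely, a head step of M is simulated by a
   resource step of a typed element of T(M), which shrinks it, so head reduction of M terminates.
   Head normal forms are meaningful: substituting \<lambda>y\<^sub>1 ... y\<^sub>k z. z for the head
   variable through a testing context reduces them to \<lambda>x.x. *)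

theory Submission
  imports Defs "HOL-Library.Function_Algebras"
begin

lemma rlift_0 [simp]: "rlift 0 c m = m"
  by (induction m arbitrary: c) (auto intro: multiset.map_ident_strong)

lemma rlift_rlift: "rlift a c (rlift b c m) = rlift (a + b) c m"
  by (induction m arbitrary: c) (auto simp: multiset.map_comp intro!: multiset.map_cong0)

lemma image_mset_rlift_rlift [simp]:
  "image_mset (rlift a c) (image_mset (rlift b c) B) = image_mset (rlift (a + b) c) B"
  by (simp add: multiset.map_comp o_def rlift_rlift)

lemma rlift_eq_RBag_iff: "rlift k c m = RBag B \<longleftrightarrow> (\<exists>B0. m = RBag B0 \<and> B = image_mset (rlift k c) B0)"
  by (cases m) auto

lemma rlift_eq_iff:
  "rlift k c m = RVar x \<longleftrightarrow> (\<exists>y. m = RVar y \<and> x = (if y < c then y else y + k))"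
  "rlift k c m = RLam a \<longleftrightarrow> (\<exists>a0. m = RLam a0 \<and> a = rlift k (Suc c) a0)"
  "rlift k c m = RApp a (RBag B) \<longleftrightarrow>
     (\<exists>a0 B0. m = RApp a0 (RBag B0) \<and> a = rlift k c a0 \<and> B = image_mset (rlift k c) B0)"
  "rlift k c m = RES a (RBag B) \<longleftrightarrow>
     (\<exists>a0 B0. m = RES a0 (RBag B0) \<and> a = rlift k (Suc c) a0 \<and> B = image_mset (rlift k c) B0)"
  by (cases m; auto simp: rlift_eq_RBag_iff)+

primrec rsize :: "rterm \<Rightarrow> nat" where
  "rsize (RVar i) = 1"
| "rsize (RLam m) = Suc (rsize m)"
| "rsize (RApp m n) = Suc (rsize m + rsize n)"
| "rsize (RES m n) = Suc (rsize m + rsize n)"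
| "rsize (RDer m) = Suc (rsize m)"
| "rsize (RBag B) = Suc (\<Sum>\<^sub># (image_mset rsize B))"

lemma rsize_rlift [simp]: "rsize (rlift k c m) = rsize m"
  by (induction m arbitrary: c)
    (auto simp: multiset.map_comp o_def intro!: arg_cong[where f = sum_mset] multiset.map_cong0)

lemma rsize_rplugL: "rsize (rplugL ls m) = rsize m + (\<Sum>l\<leftarrow>ls. Suc (rsize l))"
  by (induction ls) auto

lemma rsize_lsub:
  "lsub k m ns m' \<Longrightarrow> rsize m' \<le> rsize m + \<Sum>\<^sub># (image_mset rsize ns)"
  "lsub_bag k B ns B' \<Longrightarrow> \<Sum>\<^sub># (image_mset rsize B') \<le> \<Sum>\<^sub># (image_mset rsize B) + \<Sum>\<^sub># (image_mset rsize ns)"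
  by (induction rule: lsub_lsub_bag.inducts) (auto simp: multiset.map_comp o_def)

lemma rsize_rstep_less: "rstep m (Some m') \<Longrightarrow> rsize m' < rsize m"
proof (induction m "Some m'" arbitrary: m' rule: rstep.induct)
  case (subs ls m B m')
  then show ?case by (auto simp: rsize_rplugL dest!: rsize_lsub(1))
qed (auto simp: rsize_rplugL)

lemma rstep_beta_root: "rstep (RApp (RLam m) n) (Some (RES m n))"
  using beta[of "[]" m n] by simp

lemma rstep_subs_root: "lsub 0 m B m' \<Longrightarrow> rstep (RES m (RBag B)) (Some m')"
  using subs[of "[]" m B m'] by simp

lemma rstep_subs_zero_root: "occ 0 m \<noteq> size B \<Longrightarrow> rstep (RES m (RBag B)) None"
  using subs_zero[of m B "[]"] by simp

lemma rstep_in_RLam: "rstep m (Some m') \<Longrightarrow> rstep (RLam m) (Some (RLam m'))"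
  using c_lam[of m "Some m'"] by simp

lemma rstep_in_RApp1: "rstep m (Some m') \<Longrightarrow> rstep (RApp m n) (Some (RApp m' n))"
  using c_appL[of m "Some m'"] by simp

lemma rstep_in_RApp2: "rstep n (Some n') \<Longrightarrow> rstep (RApp m n) (Some (RApp m n'))"
  using c_appR[of n "Some n'"] by simp

lemma rstep_in_RES1: "rstep m (Some m') \<Longrightarrow> rstep (RES m n) (Some (RES m' n))"
  using c_esL[of m "Some m'"] by simp

lemma rstep_in_RES2: "rstep n (Some n') \<Longrightarrow> rstep (RES m n) (Some (RES m n'))"
  using c_esR[of n "Some n'"] by simp

lemma rstep_in_RBag: "rstep m (Some m') \<Longrightarrow> rstep (RBag (add_mset m B)) (Some (RBag (add_mset m' B)))"
  using c_bag[of m "Some m'"] by simp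

lemma rtranclp_map: "r\<^sup>*\<^sup>* a b \<Longrightarrow> (\<And>x y. r x y \<Longrightarrow> r (f x) (f y)) \<Longrightarrow> r\<^sup>*\<^sup>* (f a) (f b)"
  by (induction rule: rtranclp_induct) (auto intro: rtranclp.rtrancl_into_rtrancl)

lemma rred_in_RLam: "rred\<^sup>*\<^sup>* m m' \<Longrightarrow> rred\<^sup>*\<^sup>* (RLam m) (RLam m')"
  and rred_in_RApp1: "rred\<^sup>*\<^sup>* m m' \<Longrightarrow> rred\<^sup>*\<^sup>* (RApp m n) (RApp m' n)"
  and rred_in_RApp2: "rred\<^sup>*\<^sup>* n n' \<Longrightarrow> rred\<^sup>*\<^sup>* (RApp m n) (RApp m n')"
  and rred_in_RES1: "rred\<^sup>*\<^sup>* m m' \<Longrightarrow> rred\<^sup>*\<^sup>* (RES m n) (RES m' n)"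
  and rred_in_RES2: "rred\<^sup>*\<^sup>* n n' \<Longrightarrow> rred\<^sup>*\<^sup>* (RES m n) (RES m n')"
  and rred_in_RBag: "rred\<^sup>*\<^sup>* m m' \<Longrightarrow> rred\<^sup>*\<^sup>* (RBag (add_mset m B)) (RBag (add_mset m' B))"
  by (erule rtranclp_map, simp add: rred_def rstep_in_RLam rstep_in_RApp1 rstep_in_RApp2
    rstep_in_RES1 rstep_in_RES2 rstep_in_RBag)+

lemma mset_split_at_size:
  assumes "j \<le> size (M :: 'a multiset)"
  obtains M1 M2 where "M = M1 + M2" "size M1 = j"
proof -
  obtain xs where "M = mset xs"
    by (metis ex_mset)
  with assms show thesis
    using that[of "mset (take j xs)" "mset (drop j xs)"] by (simp flip: mset_append)
qed

lemma lsub_bag_exists: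
  assumes "\<And>m k ns. m \<in># B \<Longrightarrow> occ k m = size ns \<Longrightarrow> \<exists>m'. lsub k m ns m'"
    and "(\<Sum>m\<in>#B. occ k m) = size ns"
  shows "\<exists>B'. lsub_bag k B ns B'"
  using assms
proof (induction B arbitrary: ns)
  case empty
  then show ?case
    by (auto intro: lsub_lsub_bag.bag_empty)
next
  case (add m B)
  then obtain ns1 ns2 where ns: "ns = ns1 + ns2" "size ns1 = occ k m"
    by (metis mset_split_at_size le_add1 sum_mset.insert)
  with add.prems(2) have "(\<Sum>m\<in>#B. occ k m) = size ns2"
    by simp
  then obtain B' where "lsub_bag k B ns2 B'"
    using add.prems(1) by (metis add.IH union_iff add_mset_add_single)
  moreover obtain m' where "lsub k m ns1 m'"
    using add.prems(1) ns(2) by force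
  ultimately show ?case
    using ns(1) by (blast intro: lsub_lsub_bag.bag_add)
qed

lemma lsub_exists: "occ k m = size ns \<Longrightarrow> \<exists>m'. lsub k m ns m'"
proof (induction m arbitrary: k ns)
  case (RVar i)
  consider "i = k" | "i < k" | "k < i"
    by linarith
  then show ?case
  proof cases
    case 1
    with RVar have "size ns = 1"
      by simp
    then obtain n where "ns = {#n#}"
      using size_1_singleton_mset by blast
    with 1 show ?thesis
      by (auto intro: lsub_lsub_bag.var_eq)
  qed (use RVar in \<open>auto intro: lsub_lsub_bag.var_lt lsub_lsub_bag.var_gt\<close>)
next
  case (RLam m)
  then obtain m' where "lsub (Suc k) m (image_mset (rlift 1 0) ns) m'"
    by fastforce
  then show ?case
    by (blast intro: lsub_lsub_bag.lam)
next
  case (RApp m n)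
  then obtain ns1 ns2 where ns: "ns = ns1 + ns2" "size ns1 = occ k m"
    by (metis mset_split_at_size le_add1 occ.simps(3))
  with RApp obtain m' n' where "lsub k m ns1 m'" "lsub k n ns2 n'"
    by (metis add_left_cancel occ.simps(3) size_union)
  with ns(1) show ?case
    by (blast intro: lsub_lsub_bag.app)
next
  case (RES m n)
  then obtain ns1 ns2 where ns: "ns = ns1 + ns2" "size ns1 = occ (Suc k) m"
    by (metis mset_split_at_size le_add1 occ.simps(4))
  with RES obtain m' n' where "lsub (Suc k) m (image_mset (rlift 1 0) ns1) m'" "lsub k n ns2 n'"
    by (metis add_left_cancel occ.simps(4) size_union size_image_mset)
  with ns(1) show ?case
    by (blast intro: lsub_lsub_bag.es)
next
  case (RDer m)
  then obtain m' where "lsub k m ns m'"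
    by auto
  then show ?case
    by (blast intro: lsub_lsub_bag.der)
next
  case (RBag B)
  then obtain B' where "lsub_bag k B ns B'"
    using lsub_bag_exists[of B k ns] by auto
  then show ?case
    by (blast intro: lsub_lsub_bag.bag)
qed

lemma rnormal_RLam: "rnormal (RLam m) \<Longrightarrow> rnormal m"
  and rnormal_RApp: "rnormal (RApp m n) \<Longrightarrow> rnormal m \<and> rnormal n"
  and rnormal_RBag: "rnormal (RBag B) \<Longrightarrow> b \<in># B \<Longrightarrow> rnormal b"
  unfolding rnormal_def by (auto intro: c_lam c_appL c_appR) (metis c_bag insert_DiffM)

lemma not_rnormal_beta_root: "\<not> rnormal (RApp (RLam m) n)"
  unfolding rnormal_def using rstep_beta_root by blast

lemma not_rnormal_RES: "\<not> rnormal (RES m (RBag B))"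
  unfolding rnormal_def using lsub_exists rstep_subs_root rstep_subs_zero_root by blast

text \<open>The shape of the elements of Taylor expansions: no dereliction, and bags exactly in
  argument positions. Subject expansion needs it: \<open>der [m]\<close> reduces to \<open>m\<close>, which may be
  typable although \<open>der [m]\<close> never is.\<close>
inductive wf_rterm :: "rterm \<Rightarrow> bool" where
  wf_var: "wf_rterm (RVar x)"
| wf_lam: "wf_rterm m \<Longrightarrow> wf_rterm (RLam m)"
| wf_app: "wf_rterm m \<Longrightarrow> \<forall>b\<in>#B. wf_rterm b \<Longrightarrow> wf_rterm (RApp m (RBag B))"
| wf_es: "wf_rterm m \<Longrightarrow> \<forall>b\<in>#B. wf_rterm b \<Longrightarrow> wf_rterm (RES m (RBag B))"

definition wf_bag :: "rterm \<Rightarrow> bool" where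
  "wf_bag n \<longleftrightarrow> (\<exists>B. n = RBag B \<and> (\<forall>b\<in>#B. wf_rterm b))"

lemma wf_bag_RBag [simp]: "wf_bag (RBag B) \<longleftrightarrow> (\<forall>b\<in>#B. wf_rterm b)"
  by (simp add: wf_bag_def)

lemma wf_bag_simps [simp]:
  "\<not> wf_bag (RVar x)" "\<not> wf_bag (RLam m)" "\<not> wf_bag (RApp m n)" "\<not> wf_bag (RES m n)"
  "\<not> wf_bag (RDer m)"
  by (simp_all add: wf_bag_def)

lemma wf_bag_rplugL [simp]: "wf_bag (rplugL ls m) \<longleftrightarrow> ls = [] \<and> wf_bag m"
  by (cases ls) auto

lemma wf_rterm_simps [simp]:
  "wf_rterm (RVar x)"
  "wf_rterm (RLam m) \<longleftrightarrow> wf_rterm m"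
  "wf_rterm (RApp m n) \<longleftrightarrow> wf_rterm m \<and> wf_bag n"
  "wf_rterm (RES m n) \<longleftrightarrow> wf_rterm m \<and> wf_bag n"
  "\<not> wf_rterm (RDer m)"
  "\<not> wf_rterm (RBag B)"
  by (auto simp: wf_bag_def elim: wf_rterm.cases intro: wf_rterm.intros)

lemma wf_rterm_rlift [simp]: "wf_rterm (rlift k c m) \<longleftrightarrow> wf_rterm m"
  and wf_bag_rlift [simp]: "wf_bag (rlift k c m) \<longleftrightarrow> wf_bag m"
proof -
  have "(wf_rterm (rlift k c m) \<longleftrightarrow> wf_rterm m) \<and> (wf_bag (rlift k c m) \<longleftrightarrow> wf_bag m)"
    by (induction m arbitrary: c) (auto simp: wf_bag_def rlift_eq_RBag_iff)
  then show "wf_rterm (rlift k c m) \<longleftrightarrow> wf_rterm m" "wf_bag (rlift k c m) \<longleftrightarrow> wf_bag m"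
    by blast+
qed

lemma wf_rterm_rplugL:
  "wf_rterm (rplugL ls m) \<longleftrightarrow> wf_rterm m \<and> (\<forall>l\<in>set ls. wf_bag l)"
  by (induction ls) auto

lemma wf_lsub:
  "lsub k m ns m' \<Longrightarrow> \<forall>n\<in>#ns. wf_rterm n \<Longrightarrow>
     (wf_rterm m \<longrightarrow> wf_rterm m') \<and> (wf_bag m \<longrightarrow> wf_bag m')"
  "lsub_bag k B ns B' \<Longrightarrow> \<forall>n\<in>#ns. wf_rterm n \<Longrightarrow>
     \<forall>b\<in>#B. wf_rterm b \<Longrightarrow> \<forall>b\<in>#B'. wf_rterm b"
proof (induction rule: lsub_lsub_bag.inducts)
  case (es k m ns1 m' n ns2 n')
  have "wf_rterm m \<longrightarrow> wf_rterm m'"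
    using es.IH(1) es.prems by simp
  moreover have "wf_bag n \<longrightarrow> wf_bag n'"
    using es.IH(2) es.prems by simp
  ultimately show ?case by simp
next
  case (bag_add k m ns1 m' B ns2 B')
  have "wf_rterm m'"
    using bag_add.IH(1) bag_add.prems by simp
  moreover have "\<forall>b\<in>#B'. wf_rterm b"
    using bag_add.IH(2) bag_add.prems by simp
  ultimately show ?case by simp
qed simp_all

lemma wf_rstep:
  "rstep m (Some m') \<Longrightarrow> (wf_rterm m \<longrightarrow> wf_rterm m') \<and> (wf_bag m \<longrightarrow> wf_bag m')"
proof (induction m "Some m'" arbitrary: m' rule: rstep.induct)
  case (beta ls m n)
  then show ?case by (auto simp: wf_rterm_rplugL)
next
  case (subs ls m B m')
  then show ?case by (auto simp: wf_rterm_rplugL dest: wf_lsub(1))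
qed (auto simp: wf_bag_def)

lemma wf_rred: "rred\<^sup>*\<^sup>* m m' \<Longrightarrow> wf_rterm m \<Longrightarrow> wf_rterm m'"
  by (induction rule: rtranclp_induct) (auto simp: rred_def dest: wf_rstep)

section \<open>Non-idempotent intersection types\<close>

datatype ty = Atom | Arr "ty multiset" ty

text \<open>A typing context maps every de Bruijn index to the multiset of types it is used at;
  contexts are added pointwise.\<close>
type_synonym ctx = "nat \<Rightarrow> ty multiset"

text \<open>Sums of contexts are kept folded; \<open>ctx_apply\<close> unfolds them pointwise when needed.\<close>
declare plus_fun_apply [simp del] zero_fun_apply [simp del]
lemmas ctx_apply = plus_fun_apply zero_fun_apply

definition ctx_single :: "nat \<Rightarrow> ty \<Rightarrow> ctx" where
  "ctx_single x A = (\<lambda>i. if i = x then {#A#} else {#})"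

definition ctx_cons :: "ty multiset \<Rightarrow> ctx \<Rightarrow> ctx" where
  "ctx_cons I \<Gamma> = case_nat I \<Gamma>"

text \<open>\<open>ctx_shift k c\<close> and \<open>ctx_del k\<close> turn the context of a term into the context of the
  term after \<open>rlift k c\<close>, resp. after linear substitution for index \<open>k\<close>.\<close>
definition ctx_shift :: "nat \<Rightarrow> nat \<Rightarrow> ctx \<Rightarrow> ctx" where
  "ctx_shift k c \<Gamma> = (\<lambda>i. if i < c then \<Gamma> i else if i < c + k then {#} else \<Gamma> (i - k))"

definition ctx_del :: "nat \<Rightarrow> ctx \<Rightarrow> ctx" where
  "ctx_del k \<Gamma> = (\<lambda>i. if i < k then \<Gamma> i else \<Gamma> (Suc i))"

lemma ctx_single_apply: "ctx_single x A y = (if y = x then {#A#} else {#})"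
  by (simp add: ctx_single_def)

lemma ctx_cons_0 [simp]: "ctx_cons I \<Gamma> 0 = I"
  and ctx_cons_Suc [simp]: "ctx_cons I \<Gamma> (Suc i) = \<Gamma> i"
  by (simp_all add: ctx_cons_def)

lemma ctx_cons_plus: "ctx_cons I \<Gamma> + ctx_cons J \<Delta> = ctx_cons (I + J) (\<Gamma> + \<Delta>)"
  by (rule ext) (simp add: ctx_cons_def ctx_apply split: nat.splits)

lemma ctx_cons_eq_iff [simp]: "ctx_cons I \<Gamma> = ctx_cons J \<Delta> \<longleftrightarrow> I = J \<and> \<Gamma> = \<Delta>"
  by (metis ctx_cons_0 ctx_cons_def nat.case(2) ext)

lemma ctx_cons_tl: "ctx_cons (\<Gamma> 0) (\<lambda>i. \<Gamma> (Suc i)) = \<Gamma>"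
  by (rule ext) (simp add: ctx_cons_def split: nat.splits)

lemma ctx_cons_eq_plus_cons_empty:
  "ctx_cons I \<Gamma> = \<Gamma>' + ctx_cons {#} \<Delta> \<Longrightarrow> I = \<Gamma>' 0 \<and> \<Gamma> = (\<lambda>i. \<Gamma>' (Suc i)) + \<Delta>"
  by (metis ctx_cons_tl ctx_cons_eq_iff ctx_cons_plus add_0_right)

lemma ctx_shift_plus: "ctx_shift k c (\<Gamma> + \<Delta>) = ctx_shift k c \<Gamma> + ctx_shift k c \<Delta>"
  and ctx_shift_zero [simp]: "ctx_shift k c 0 = 0"
  by (rule ext, simp add: ctx_shift_def ctx_apply)+

lemma ctx_shift_single: "ctx_shift k c (ctx_single x A) = ctx_single (if x < c then x else x + k) A"
  by (rule ext) (auto simp: ctx_shift_def ctx_single_def)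

lemma ctx_shift_cons: "ctx_shift k (Suc c) (ctx_cons I \<Gamma>) = ctx_cons I (ctx_shift k c \<Gamma>)"
  by (rule ext) (auto simp: ctx_shift_def ctx_cons_def Suc_diff_le split: nat.splits)

lemma ctx_shift_1_0 [simp]: "ctx_shift (Suc 0) 0 \<Gamma> = ctx_cons {#} \<Gamma>"
  by (rule ext) (auto simp: ctx_shift_def ctx_cons_def split: nat.splits)

lemma ctx_cons_eq_shift_Suc_iff:
  "ctx_cons I \<Gamma> = ctx_shift k (Suc c) \<Delta> \<longleftrightarrow> (\<exists>\<Delta>'. \<Delta> = ctx_cons I \<Delta>' \<and> \<Gamma> = ctx_shift k c \<Delta>')"
  by (metis ctx_cons_eq_iff ctx_cons_tl ctx_shift_cons)

lemma ctx_del_plus: "ctx_del k (\<Gamma> + \<Delta>) = ctx_del k \<Gamma> + ctx_del k \<Delta>"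
  and ctx_del_zero [simp]: "ctx_del k 0 = 0"
  by (rule ext, simp add: ctx_del_def ctx_apply)+

lemma ctx_del_plus_plus:
  "ctx_del k (\<Gamma>1 + \<Gamma>2) + (\<Delta>1 + \<Delta>2) = (ctx_del k \<Gamma>1 + \<Delta>1) + (ctx_del k \<Gamma>2 + \<Delta>2)"
  by (simp add: ctx_del_plus add_ac)

lemma ctx_del_single:
  "ctx_del k (ctx_single x A) = (if x < k then ctx_single x A else if x = k then 0 else ctx_single (x - 1) A)"
  by (rule ext) (auto simp: ctx_del_def ctx_single_def ctx_apply)

lemma ctx_del_Suc_cons: "ctx_del (Suc k) (ctx_cons I \<Gamma>) = ctx_cons I (ctx_del k \<Gamma>)"
  by (rule ext) (auto simp: ctx_del_def ctx_cons_def split: nat.splits)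

lemma ctx_del_0_cons [simp]: "ctx_del 0 (ctx_cons I \<Gamma>) = \<Gamma>"
  by (rule ext) (auto simp: ctx_del_def ctx_cons_def)

lemma ctx_del_Suc_cons_plus:
  "ctx_del (Suc k) (ctx_cons I \<Gamma>) + ctx_cons {#} \<Delta> = ctx_cons I (ctx_del k \<Gamma> + \<Delta>)"
  by (simp add: ctx_del_Suc_cons ctx_cons_plus)

lemma ctx_cons_eq_del_Suc_plus_iff:
  "ctx_cons I \<Theta> = ctx_del (Suc k) \<Gamma> + ctx_cons {#} \<Delta> \<longleftrightarrow>
     (\<exists>\<Gamma>0. \<Gamma> = ctx_cons I \<Gamma>0 \<and> \<Theta> = ctx_del k \<Gamma>0 + \<Delta>)"
proof -
  obtain J \<Gamma>' where "\<Gamma> = ctx_cons J \<Gamma>'"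
    using ctx_cons_tl by metis
  then show ?thesis
    by (auto simp: ctx_del_Suc_cons_plus)
qed

inductive typed :: "ctx \<Rightarrow> rterm \<Rightarrow> ty \<Rightarrow> bool"
  and typed_bag :: "ctx \<Rightarrow> rterm multiset \<Rightarrow> ty multiset \<Rightarrow> bool" where
  typed_var: "typed (ctx_single x A) (RVar x) A"
| typed_lam: "typed (ctx_cons I \<Gamma>) m A \<Longrightarrow> typed \<Gamma> (RLam m) (Arr I A)"
| typed_app: "typed \<Gamma> m (Arr I A) \<Longrightarrow> typed_bag \<Delta> B I \<Longrightarrow> typed (\<Gamma> + \<Delta>) (RApp m (RBag B)) A"
| typed_es: "typed (ctx_cons I \<Gamma>) m A \<Longrightarrow> typed_bag \<Delta> B I \<Longrightarrow> typed (\<Gamma> + \<Delta>) (RES m (RBag B)) A"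
| typed_bag_empty: "typed_bag 0 {#} {#}"
| typed_bag_add: "typed \<Gamma> m A \<Longrightarrow> typed_bag \<Delta> B I \<Longrightarrow>
    typed_bag (\<Gamma> + \<Delta>) (add_mset m B) (add_mset A I)"

lemma typed_RVar_iff: "typed \<Gamma> (RVar x) A \<longleftrightarrow> \<Gamma> = ctx_single x A"
  by (auto elim: typed.cases intro: typed_var)

lemma typed_RLam_iff: "typed \<Gamma> (RLam m) T \<longleftrightarrow> (\<exists>I A. T = Arr I A \<and> typed (ctx_cons I \<Gamma>) m A)"
  by (auto elim: typed.cases intro: typed_lam)

definition typed_arg :: "ctx \<Rightarrow> rterm \<Rightarrow> ty multiset \<Rightarrow> bool" where
  "typed_arg \<Gamma> n I \<longleftrightarrow> (\<exists>B. n = RBag B \<and> typed_bag \<Gamma> B I)"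

lemma typed_arg_simps [simp]:
  "typed_arg \<Gamma> (RBag B) I \<longleftrightarrow> typed_bag \<Gamma> B I"
  "\<not> typed_arg \<Gamma> (RVar x) I" "\<not> typed_arg \<Gamma> (RLam m) I" "\<not> typed_arg \<Gamma> (RApp m n) I"
  "\<not> typed_arg \<Gamma> (RES m n) I" "\<not> typed_arg \<Gamma> (RDer m) I"
  by (simp_all add: typed_arg_def)

lemma typed_arg_rplugL [simp]: "typed_arg \<Gamma> (rplugL ls n) I \<longleftrightarrow> ls = [] \<and> typed_arg \<Gamma> n I"
  by (cases ls) auto

lemma typed_RApp_iff:
  "typed \<Theta> (RApp m n) A \<longleftrightarrow>
     (\<exists>\<Gamma> \<Delta> I. \<Theta> = \<Gamma> + \<Delta> \<and> typed \<Gamma> m (Arr I A) \<and> typed_arg \<Delta> n I)"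
  by (rule iffI, erule typed.cases) (auto simp: typed_arg_def intro: typed_app)

lemma typed_RES_iff:
  "typed \<Theta> (RES m n) A \<longleftrightarrow>
     (\<exists>\<Gamma> \<Delta> I. \<Theta> = \<Gamma> + \<Delta> \<and> typed (ctx_cons I \<Gamma>) m A \<and> typed_arg \<Delta> n I)"
  by (rule iffI, erule typed.cases) (auto simp: typed_arg_def intro: typed_es)

lemma not_typed_RDer [simp]: "\<not> typed \<Gamma> (RDer m) A"
  and not_typed_RBag [simp]: "\<not> typed \<Gamma> (RBag B) A"
  by (auto elim: typed.cases)

lemma typed_bag_induct [consumes 1, case_names empty add]:
  assumes "typed_bag \<Gamma> B I"
    and "P 0 {#} {#}"
    and "\<And>\<Gamma> m A \<Delta> B I. typed \<Gamma> m A \<Longrightarrow> typed_bag \<Delta> B I \<Longrightarrow> P \<Delta> B I \<Longrightarrow>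
           P (\<Gamma> + \<Delta>) (add_mset m B) (add_mset A I)"
  shows "P \<Gamma> B I"
  using assms by (induction rule: typed_typed_bag.inducts(2)[where ?P1.0 = "\<lambda>_ _ _. True"]) auto

lemma typed_bag_empty_iff [simp]: "typed_bag \<Gamma> {#} I \<longleftrightarrow> \<Gamma> = 0 \<and> I = {#}"
  by (auto elim: typed_bag.cases intro: typed_bag_empty)

lemma typed_bag_no_types: "typed_bag \<Gamma> B {#} \<Longrightarrow> B = {#} \<and> \<Gamma> = 0"
  by (auto elim: typed_bag.cases)

lemma typed_bag_size: "typed_bag \<Gamma> B I \<Longrightarrow> size B = size I"
  by (induction rule: typed_bag_induct) auto

lemma typed_bag_union:
  "typed_bag \<Gamma>1 B1 I1 \<Longrightarrow> typed_bag \<Gamma>2 B2 I2 \<Longrightarrow> typed_bag (\<Gamma>1 + \<Gamma>2) (B1 + B2) (I1 + I2)"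
proof (induction rule: typed_bag_induct)
  case (add \<Gamma> m A \<Delta> B I)
  then have "typed_bag (\<Gamma> + (\<Delta> + \<Gamma>2)) (add_mset m (B + B2)) (add_mset A (I + I2))"
    by (intro typed_bag_add) auto
  then show ?case by (simp add: add.assoc)
qed simp

lemma typed_bag_union_at:
  "typed_bag \<Delta>1 ns1 (\<Gamma>1 k) \<Longrightarrow> typed_bag \<Delta>2 ns2 (\<Gamma>2 k) \<Longrightarrow>
     typed_bag (\<Delta>1 + \<Delta>2) (ns1 + ns2) ((\<Gamma>1 + \<Gamma>2) k)"
  by (simp add: typed_bag_union ctx_apply)

lemma typed_bag_single_iff: "typed_bag \<Gamma> {#m#} {#A#} \<longleftrightarrow> typed \<Gamma> m A"
  using typed_bag_add[of \<Gamma> m A 0 "{#}" "{#}"] by (auto elim: typed_bag.cases)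

lemma typed_bag_single_type: "typed_bag \<Theta> ns {#A#} \<Longrightarrow> \<exists>n. ns = {#n#} \<and> typed \<Theta> n A"
  by (metis size_1_singleton_mset size_single typed_bag_single_iff typed_bag_size)

lemma typed_bag_remove:
  "typed_bag \<Theta> B I \<Longrightarrow> m \<in># B \<Longrightarrow>
     \<exists>\<Gamma> \<Delta> A I'. typed \<Gamma> m A \<and> typed_bag \<Delta> (B - {#m#}) I' \<and> I = add_mset A I' \<and> \<Theta> = \<Gamma> + \<Delta>"
proof (induction rule: typed_bag_induct)
  case (add \<Gamma> m0 A0 \<Delta> B I)
  show ?case
  proof (cases "m = m0")
    case False
    then obtain \<Gamma>1 \<Gamma>2 A I' where rest: "typed \<Gamma>1 m A" "typed_bag \<Gamma>2 (B - {#m#}) I'"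
      "I = add_mset A I'" "\<Delta> = \<Gamma>1 + \<Gamma>2"
      using add by auto
    have "typed_bag (\<Gamma> + \<Gamma>2) (add_mset m0 (B - {#m#})) (add_mset A0 I')"
      using add.hyps(1) rest(2) by (rule typed_bag_add)
    moreover have "add_mset m0 (B - {#m#}) = add_mset m0 B - {#m#}"
      using False add.prems by (simp add: diff_add_mset_swap)
    ultimately show ?thesis
      using rest by (intro exI[of _ \<Gamma>1] exI[of _ "\<Gamma> + \<Gamma>2"] exI[of _ A] exI[of _ "add_mset A0 I'"])
        (simp add: add_mset_commute add.left_commute)
  qed (use add.hyps in auto)
qed simp

lemma typed_bag_add_mset_inv:
  "typed_bag \<Theta> (add_mset m B) I \<Longrightarrow>
     \<exists>\<Gamma> \<Delta> A I'. typed \<Gamma> m A \<and> typed_bag \<Delta> B I' \<and> I = add_mset A I' \<and> \<Theta> = \<Gamma> + \<Delta>"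
  using typed_bag_remove[of \<Theta> "add_mset m B" I m] by auto

lemma typed_bag_split:
  "typed_bag \<Delta> B (I1 + I2) \<Longrightarrow>
     \<exists>B1 B2 \<Delta>1 \<Delta>2. B = B1 + B2 \<and> \<Delta> = \<Delta>1 + \<Delta>2 \<and> typed_bag \<Delta>1 B1 I1 \<and> typed_bag \<Delta>2 B2 I2"
proof (induction "I1 + I2" arbitrary: I1 I2 rule: typed_bag_induct)
  case empty
  then show ?case by force
next
  case (add \<Gamma> m A \<Delta> B I)
  show ?case
  proof (cases "A \<in># I1")
    case True
    then have "I = (I1 - {#A#}) + I2"
      using add.hyps(4) diff_union_single_conv[of A I1 I2] by (metis add.commute add_mset_remove_trivial)
    then obtain B1 B2 \<Delta>1 \<Delta>2 where parts: "B = B1 + B2" "\<Delta> = \<Delta>1 + \<Delta>2"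
      "typed_bag \<Delta>1 B1 (I1 - {#A#})" "typed_bag \<Delta>2 B2 I2"
      using add.hyps(3) by blast
    have "typed_bag (\<Gamma> + \<Delta>1) (add_mset m B1) I1"
      using typed_bag_add[OF add.hyps(1) parts(3)] True by simp
    then show ?thesis
      using parts by (intro exI[of _ "add_mset m B1"] exI[of _ B2] exI[of _ "\<Gamma> + \<Delta>1"] exI[of _ \<Delta>2])
        (simp add: add.assoc)
  next
    case False
    then have A2: "A \<in># I2"
      using add.hyps(4) by (metis union_iff union_single_eq_member)
    then have "I = I1 + (I2 - {#A#})"
      using add.hyps(4) diff_union_single_conv[of A I2 I1] by (metis add_mset_remove_trivial)
    then obtain B1 B2 \<Delta>1 \<Delta>2 where parts: "B = B1 + B2" "\<Delta> = \<Delta>1 + \<Delta>2"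
      "typed_bag \<Delta>1 B1 I1" "typed_bag \<Delta>2 B2 (I2 - {#A#})"
      using add.hyps(3) by blast
    have "typed_bag (\<Gamma> + \<Delta>2) (add_mset m B2) I2"
      using typed_bag_add[OF add.hyps(1) parts(4)] A2 by simp
    then show ?thesis
      using parts by (intro exI[of _ B1] exI[of _ "add_mset m B2"] exI[of _ \<Delta>1] exI[of _ "\<Gamma> + \<Delta>2"])
        (simp add: add.left_commute)
  qed
qed

lemma typed_bag_split_ctx:
  assumes "typed_bag \<Delta> ns ((\<Gamma>1 + \<Gamma>2) k)"
  obtains ns1 ns2 \<Delta>1 \<Delta>2 where "ns = ns1 + ns2" "\<Delta> = \<Delta>1 + \<Delta>2"
    "typed_bag \<Delta>1 ns1 (\<Gamma>1 k)" "typed_bag \<Delta>2 ns2 (\<Gamma>2 k)"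
  using typed_bag_split[of \<Delta> ns "\<Gamma>1 k" "\<Gamma>2 k"] assms by (auto simp: ctx_apply)

lemma typed_bag_of_typed: "\<forall>b\<in>#B. \<exists>\<Gamma> A. typed \<Gamma> b A \<Longrightarrow> \<exists>\<Theta> I. typed_bag \<Theta> B I"
  by (induction B) (auto intro: typed_bag_add typed_bag_empty)

section \<open>Typing under lifting and linear substitution\<close>

lemma typed_rlift:
  "typed \<Gamma> m A \<Longrightarrow> typed (ctx_shift k c \<Gamma>) (rlift k c m) A"
  "typed_bag \<Gamma> B I \<Longrightarrow> typed_bag (ctx_shift k c \<Gamma>) (image_mset (rlift k c) B) I"
proof (induction arbitrary: c and c rule: typed_typed_bag.inducts)
  case (typed_lam I \<Gamma> m A)
  then show ?case by (simp add: typed_typed_bag.typed_lam flip: ctx_shift_cons)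
next
  case (typed_es I \<Gamma> m A \<Delta> B)
  have "typed (ctx_cons I (ctx_shift k c \<Gamma>)) (rlift k (Suc c) m) A"
    using typed_es.IH(1)[of "Suc c"] by (simp add: ctx_shift_cons)
  with typed_es.IH(2) have "typed (ctx_shift k c \<Gamma> + ctx_shift k c \<Delta>)
      (RES (rlift k (Suc c) m) (RBag (image_mset (rlift k c) B))) A"
    by (intro typed_typed_bag.typed_es)
  then show ?case
    by (simp add: ctx_shift_plus)
qed (auto simp: ctx_shift_single ctx_shift_plus intro: typed_typed_bag.intros)

lemma typed_bag_rlift_1_0:
  "typed_bag \<Delta> B I \<Longrightarrow> typed_bag (ctx_cons {#} \<Delta>) (image_mset (rlift 1 0) B) I"
  using typed_rlift(2)[of \<Delta> B I 1 0] by simp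

lemma typed_rlift_inv:
  "typed \<Gamma> t A \<Longrightarrow> rlift k c m = t \<Longrightarrow> \<exists>\<Delta>. \<Gamma> = ctx_shift k c \<Delta> \<and> typed \<Delta> m A"
  "typed_bag \<Gamma> B' I \<Longrightarrow> image_mset (rlift k c) B = B' \<Longrightarrow>
     \<exists>\<Delta>. \<Gamma> = ctx_shift k c \<Delta> \<and> typed_bag \<Delta> B I"
proof (induction arbitrary: c m and c B rule: typed_typed_bag.inducts)
  case (typed_var x A)
  then obtain y where "m = RVar y" "x = (if y < c then y else y + k)"
    by (auto simp: rlift_eq_iff)
  then show ?case
    by (intro exI[of _ "ctx_single y A"]) (simp add: ctx_shift_single typed_typed_bag.typed_var)
next
  case (typed_lam I \<Gamma> m' A)
  then obtain m0 where m: "m = RLam m0" "m' = rlift k (Suc c) m0"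
    by (auto simp: rlift_eq_iff)
  with typed_lam.IH[of "Suc c" m0] obtain \<Delta> where "ctx_cons I \<Gamma> = ctx_shift k (Suc c) \<Delta>" "typed \<Delta> m0 A"
    by auto
  then show ?case
    using m by (auto simp: ctx_cons_eq_shift_Suc_iff intro: typed_typed_bag.typed_lam)
next
  case (typed_app \<Gamma> m' I A \<Delta>' B')
  then obtain m0 B0 where m: "m = RApp m0 (RBag B0)" "m' = rlift k c m0" "B' = image_mset (rlift k c) B0"
    by (auto simp: rlift_eq_iff)
  obtain \<Delta>1 where "\<Gamma> = ctx_shift k c \<Delta>1" "typed \<Delta>1 m0 (Arr I A)"
    using typed_app.IH(1)[of c m0] m by auto
  moreover obtain \<Delta>2 where "\<Delta>' = ctx_shift k c \<Delta>2" "typed_bag \<Delta>2 B0 I"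
    using typed_app.IH(2)[of c B0] m by auto
  ultimately show ?case
    using m by (intro exI[of _ "\<Delta>1 + \<Delta>2"]) (simp add: ctx_shift_plus typed_typed_bag.typed_app)
next
  case (typed_es I \<Gamma> m' A \<Delta>' B')
  then obtain m0 B0 where m: "m = RES m0 (RBag B0)" "m' = rlift k (Suc c) m0" "B' = image_mset (rlift k c) B0"
    by (auto simp: rlift_eq_iff)
  obtain \<Delta>1 where "ctx_cons I \<Gamma> = ctx_shift k (Suc c) \<Delta>1" "typed \<Delta>1 m0 A"
    using typed_es.IH(1)[of "Suc c" m0] m by auto
  then obtain \<Delta>0 where "typed (ctx_cons I \<Delta>0) m0 A" "\<Gamma> = ctx_shift k c \<Delta>0"
    by (auto simp: ctx_cons_eq_shift_Suc_iff)
  moreover obtain \<Delta>2 where "\<Delta>' = ctx_shift k c \<Delta>2" "typed_bag \<Delta>2 B0 I"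
    using typed_es.IH(2)[of c B0] m by auto
  ultimately show ?case
    using m by (intro exI[of _ "\<Delta>0 + \<Delta>2"]) (simp add: ctx_shift_plus typed_typed_bag.typed_es)
next
  case (typed_bag_add \<Gamma> m' A \<Delta>' B' I)
  then obtain m0 B0 where m: "B = add_mset m0 B0" "m' = rlift k c m0" "B' = image_mset (rlift k c) B0"
    by (metis msed_map_invR)
  obtain \<Delta>1 where "\<Gamma> = ctx_shift k c \<Delta>1" "typed \<Delta>1 m0 A"
    using typed_bag_add.IH(1)[of c m0] m by auto
  moreover obtain \<Delta>2 where "\<Delta>' = ctx_shift k c \<Delta>2" "typed_bag \<Delta>2 B0 I"
    using typed_bag_add.IH(2)[of c B0] m by auto
  ultimately show ?case
    using m by (intro exI[of _ "\<Delta>1 + \<Delta>2"]) (simp add: ctx_shift_plus typed_typed_bag.typed_bag_add)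
qed simp

lemma typed_bag_rlift_1_0_inv:
  "typed_bag \<Gamma> (image_mset (rlift 1 0) B) I \<Longrightarrow> \<exists>\<Delta>. \<Gamma> = ctx_cons {#} \<Delta> \<and> typed_bag \<Delta> B I"
  using typed_rlift_inv(2)[of \<Gamma> _ I 1 0 B] by simp

lemma typed_lsub_RVar:
  assumes "typed_bag \<Delta> ns (ctx_single x A k)"
  shows "\<exists>m'. lsub k (RVar x) ns m' \<and> typed (ctx_del k (ctx_single x A) + \<Delta>) m' A"
proof -
  consider "x = k" | "x < k" | "k < x" by linarith
  then show ?thesis
  proof cases
    case 1
    with assms obtain n where "ns = {#n#}" "typed \<Delta> n A"
      by (auto simp: ctx_single_apply dest: typed_bag_single_type)
    with 1 show ?thesis
      by (auto simp: ctx_del_single intro: lsub_lsub_bag.var_eq)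
  next
    case 2
    with assms have "ns = {#}" "\<Delta> = 0"
      by (auto simp: ctx_single_apply dest: typed_bag_no_types)
    with 2 show ?thesis
      by (auto simp: ctx_del_single intro: lsub_lsub_bag.var_lt typed_typed_bag.typed_var)
  next
    case 3
    with assms have "ns = {#}" "\<Delta> = 0"
      by (auto simp: ctx_single_apply dest: typed_bag_no_types)
    with 3 show ?thesis
      using lsub_lsub_bag.var_gt[of k x]
      by (auto simp: ctx_del_single intro: typed_typed_bag.typed_var)
  qed
qed

lemma typed_lsub:
  "typed \<Gamma> m A \<Longrightarrow> typed_bag \<Delta> ns (\<Gamma> k) \<Longrightarrow>
     \<exists>m'. lsub k m ns m' \<and> typed (ctx_del k \<Gamma> + \<Delta>) m' A"
  "typed_bag \<Gamma> B I \<Longrightarrow> typed_bag \<Delta> ns (\<Gamma> k) \<Longrightarrow>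
     \<exists>B'. lsub_bag k B ns B' \<and> typed_bag (ctx_del k \<Gamma> + \<Delta>) B' I"
proof (induction arbitrary: k \<Delta> ns and k \<Delta> ns rule: typed_typed_bag.inducts)
  case (typed_var x A)
  then show ?case
    by (rule typed_lsub_RVar)
next
  case (typed_lam I \<Gamma> m A)
  have "typed_bag (ctx_cons {#} \<Delta>) (image_mset (rlift 1 0) ns) (ctx_cons I \<Gamma> (Suc k))"
    using typed_bag_rlift_1_0[OF typed_lam.prems] by simp
  with typed_lam.IH obtain m' where "lsub (Suc k) m (image_mset (rlift 1 0) ns) m'"
    "typed (ctx_cons I (ctx_del k \<Gamma> + \<Delta>)) m' A"
    by (metis ctx_del_Suc_cons_plus)
  then show ?case
    by (blast intro: lsub_lsub_bag.lam typed_typed_bag.typed_lam)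
next
  case (typed_app \<Gamma> m I A \<Delta>' B)
  from typed_app.prems obtain ns1 ns2 \<Delta>1 \<Delta>2 where ns: "ns = ns1 + ns2" "\<Delta> = \<Delta>1 + \<Delta>2"
    "typed_bag \<Delta>1 ns1 (\<Gamma> k)" "typed_bag \<Delta>2 ns2 (\<Delta>' k)"
    by (rule typed_bag_split_ctx)
  obtain m' where "lsub k m ns1 m'" "typed (ctx_del k \<Gamma> + \<Delta>1) m' (Arr I A)"
    using typed_app.IH(1) ns(3) by blast
  moreover obtain B' where "lsub_bag k B ns2 B'" "typed_bag (ctx_del k \<Delta>' + \<Delta>2) B' I"
    using typed_app.IH(2) ns(4) by blast
  ultimately show ?case
    using ns(1,2) by (auto simp: ctx_del_plus_plus intro: lsub_lsub_bag.app lsub_lsub_bag.bag typed_typed_bag.typed_app)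
next
  case (typed_es I \<Gamma> m A \<Delta>' B)
  from typed_es.prems obtain ns1 ns2 \<Delta>1 \<Delta>2 where ns: "ns = ns1 + ns2" "\<Delta> = \<Delta>1 + \<Delta>2"
    "typed_bag \<Delta>1 ns1 (\<Gamma> k)" "typed_bag \<Delta>2 ns2 (\<Delta>' k)"
    by (rule typed_bag_split_ctx)
  have "typed_bag (ctx_cons {#} \<Delta>1) (image_mset (rlift 1 0) ns1) (ctx_cons I \<Gamma> (Suc k))"
    using typed_bag_rlift_1_0[OF ns(3)] by simp
  with typed_es.IH(1) obtain m' where "lsub (Suc k) m (image_mset (rlift 1 0) ns1) m'"
    "typed (ctx_cons I (ctx_del k \<Gamma> + \<Delta>1)) m' A"
    by (metis ctx_del_Suc_cons_plus)
  moreover obtain B' where "lsub_bag k B ns2 B'" "typed_bag (ctx_del k \<Delta>' + \<Delta>2) B' I"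
    using typed_es.IH(2) ns(4) by blast
  ultimately have "lsub k (RES m (RBag B)) ns (RES m' (RBag B'))"
    "typed (ctx_del k (\<Gamma> + \<Delta>') + \<Delta>) (RES m' (RBag B')) A"
    using ns(1,2) by (auto simp only: ctx_del_plus_plus
      intro: lsub_lsub_bag.es lsub_lsub_bag.bag typed_typed_bag.typed_es)
  then show ?case
    by blast
next
  case (typed_bag_empty k \<Delta> ns)
  then have "ns = {#}" "\<Delta> = 0"
    by (auto simp: zero_fun_apply dest: typed_bag_no_types)
  then show ?case
    by (auto intro: lsub_lsub_bag.bag_empty)
next
  case (typed_bag_add \<Gamma> m A \<Delta>' B I)
  from typed_bag_add.prems obtain ns1 ns2 \<Delta>1 \<Delta>2 where ns: "ns = ns1 + ns2" "\<Delta> = \<Delta>1 + \<Delta>2"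
    "typed_bag \<Delta>1 ns1 (\<Gamma> k)" "typed_bag \<Delta>2 ns2 (\<Delta>' k)"
    by (rule typed_bag_split_ctx)
  obtain m' where "lsub k m ns1 m'" "typed (ctx_del k \<Gamma> + \<Delta>1) m' A"
    using typed_bag_add.IH(1) ns(3) by blast
  moreover obtain B' where "lsub_bag k B ns2 B'" "typed_bag (ctx_del k \<Delta>' + \<Delta>2) B' I"
    using typed_bag_add.IH(2) ns(4) by blast
  ultimately show ?case
    using ns(1,2) by (auto simp: ctx_del_plus_plus intro: lsub_lsub_bag.bag_add typed_typed_bag.typed_bag_add)
qed

text \<open>\<open>lsub_ctx k ns \<Gamma> \<Theta>\<close>: substituting \<open>ns\<close> for index \<open>k\<close> in a term typed in \<open>\<Gamma>\<close> gives a
  term typed in \<open>\<Theta>\<close>.\<close>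
definition lsub_ctx :: "nat \<Rightarrow> rterm multiset \<Rightarrow> ctx \<Rightarrow> ctx \<Rightarrow> bool" where
  "lsub_ctx k ns \<Gamma> \<Theta> \<longleftrightarrow> (\<exists>\<Delta>. typed_bag \<Delta> ns (\<Gamma> k) \<and> \<Theta> = ctx_del k \<Gamma> + \<Delta>)"

lemma lsub_ctx_plus:
  assumes "lsub_ctx k ns1 \<Gamma>1 \<Theta>1" and "lsub_ctx k ns2 \<Gamma>2 \<Theta>2"
  shows "lsub_ctx k (ns1 + ns2) (\<Gamma>1 + \<Gamma>2) (\<Theta>1 + \<Theta>2)"
proof -
  from assms obtain \<Delta>1 \<Delta>2 where "typed_bag \<Delta>1 ns1 (\<Gamma>1 k)" "\<Theta>1 = ctx_del k \<Gamma>1 + \<Delta>1"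
    "typed_bag \<Delta>2 ns2 (\<Gamma>2 k)" "\<Theta>2 = ctx_del k \<Gamma>2 + \<Delta>2"
    by (auto simp: lsub_ctx_def)
  then show ?thesis
    unfolding lsub_ctx_def
    by (intro exI[of _ "\<Delta>1 + \<Delta>2"]) (simp add: ctx_del_plus_plus typed_bag_union_at)
qed

lemma lsub_ctx_cons:
  assumes "lsub_ctx (Suc k) (image_mset (rlift 1 0) ns) \<Gamma> (ctx_cons J \<Theta>)"
  shows "\<exists>\<Gamma>'. \<Gamma> = ctx_cons J \<Gamma>' \<and> lsub_ctx k ns \<Gamma>' \<Theta>"
proof -
  from assms obtain \<Delta>' where "typed_bag \<Delta>' (image_mset (rlift 1 0) ns) (\<Gamma> (Suc k))"
    "ctx_cons J \<Theta> = ctx_del (Suc k) \<Gamma> + \<Delta>'"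
    by (auto simp: lsub_ctx_def)
  moreover from this(1) obtain \<Delta> where "\<Delta>' = ctx_cons {#} \<Delta>" "typed_bag \<Delta> ns (\<Gamma> (Suc k))"
    by (blast dest: typed_bag_rlift_1_0_inv)
  ultimately show ?thesis
    by (auto simp: lsub_ctx_def ctx_cons_eq_del_Suc_plus_iff)
qed

lemma typed_lsub_inv:
  "lsub k m ns m' \<Longrightarrow>
     (wf_rterm m \<longrightarrow> typed \<Theta> m' A \<longrightarrow> (\<exists>\<Gamma>. typed \<Gamma> m A \<and> lsub_ctx k ns \<Gamma> \<Theta>)) \<and>
     (wf_bag m \<longrightarrow> typed_arg \<Theta> m' I \<longrightarrow> (\<exists>\<Gamma>. typed_arg \<Gamma> m I \<and> lsub_ctx k ns \<Gamma> \<Theta>))"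
  "lsub_bag k B ns B' \<Longrightarrow> \<forall>b\<in>#B. wf_rterm b \<Longrightarrow> typed_bag \<Theta> B' I \<Longrightarrow>
     \<exists>\<Gamma>. typed_bag \<Gamma> B I \<and> lsub_ctx k ns \<Gamma> \<Theta>"
proof (induction arbitrary: \<Theta> A I and \<Theta> I rule: lsub_lsub_bag.inducts)
  case (var_eq k n)
  have "lsub_ctx k {#n#} (ctx_single k A) \<Theta>" if "typed \<Theta> n A"
    using that unfolding lsub_ctx_def
    by (intro exI[of _ \<Theta>]) (simp add: ctx_single_apply ctx_del_single typed_bag_single_iff)
  then show ?case
    by (auto intro: typed_typed_bag.typed_var)
next
  case (var_lt i k)
  then show ?case
    by (auto simp: typed_RVar_iff lsub_ctx_def ctx_single_apply ctx_del_single)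
next
  case (var_gt i k)
  then show ?case
    by (auto simp: typed_RVar_iff lsub_ctx_def ctx_single_apply ctx_del_single
      intro!: exI[of _ "ctx_single i A"] typed_typed_bag.typed_var)
next
  case (lam k m ns m')
  show ?case
  proof (intro conjI impI)
    assume "wf_rterm (RLam m)" "typed \<Theta> (RLam m') A"
    then obtain J A' where "A = Arr J A'" "typed (ctx_cons J \<Theta>) m' A'" "wf_rterm m"
      by (auto simp: typed_RLam_iff)
    with lam.IH show "\<exists>\<Gamma>. typed \<Gamma> (RLam m) A \<and> lsub_ctx k ns \<Gamma> \<Theta>"
      by (blast dest: lsub_ctx_cons intro: typed_typed_bag.typed_lam)
  qed simp
next
  case (app k m ns1 m' n ns2 n')
  show ?case
  proof (intro conjI impI)
    assume "wf_rterm (RApp m n)" "typed \<Theta> (RApp m' n') A"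
    then obtain \<Theta>1 \<Theta>2 J where "\<Theta> = \<Theta>1 + \<Theta>2" "typed \<Theta>1 m' (Arr J A)" "typed_arg \<Theta>2 n' J"
      "wf_rterm m" "wf_bag n"
      by (auto simp: typed_RApp_iff)
    moreover from calculation app.IH(1) obtain \<Gamma>1 where "typed \<Gamma>1 m (Arr J A)" "lsub_ctx k ns1 \<Gamma>1 \<Theta>1"
      by blast
    moreover from calculation app.IH(2) obtain \<Gamma>2 where "typed_arg \<Gamma>2 n J" "lsub_ctx k ns2 \<Gamma>2 \<Theta>2"
      by blast
    ultimately show "\<exists>\<Gamma>. typed \<Gamma> (RApp m n) A \<and> lsub_ctx k (ns1 + ns2) \<Gamma> \<Theta>"
      by (intro exI[of _ "\<Gamma>1 + \<Gamma>2"]) (auto simp: typed_RApp_iff intro: lsub_ctx_plus)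
  qed simp
next
  case (es k m ns1 m' n ns2 n')
  show ?case
  proof (intro conjI impI)
    assume "wf_rterm (RES m n)" "typed \<Theta> (RES m' n') A"
    then obtain \<Theta>1 \<Theta>2 J where "\<Theta> = \<Theta>1 + \<Theta>2" "typed (ctx_cons J \<Theta>1) m' A" "typed_arg \<Theta>2 n' J"
      "wf_rterm m" "wf_bag n"
      by (auto simp: typed_RES_iff)
    moreover from calculation es.IH(1) obtain \<Gamma>1 where "typed (ctx_cons J \<Gamma>1) m A" "lsub_ctx k ns1 \<Gamma>1 \<Theta>1"
      by (blast dest: lsub_ctx_cons)
    moreover from calculation es.IH(2) obtain \<Gamma>2 where "typed_arg \<Gamma>2 n J" "lsub_ctx k ns2 \<Gamma>2 \<Theta>2"
      by blast
    ultimately show "\<exists>\<Gamma>. typed \<Gamma> (RES m n) A \<and> lsub_ctx k (ns1 + ns2) \<Gamma> \<Theta>"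
      by (intro exI[of _ "\<Gamma>1 + \<Gamma>2"]) (auto simp: typed_RES_iff intro: lsub_ctx_plus)
  qed simp
next
  case (bag k B ns B')
  then show ?case
    by (auto simp: typed_arg_def)
next
  case (bag_empty k)
  then show ?case
    by (auto simp: lsub_ctx_def zero_fun_apply)
next
  case (bag_add k m ns1 m' B ns2 B')
  from bag_add.prems obtain \<Theta>1 \<Theta>2 A J where "typed \<Theta>1 m' A" "typed_bag \<Theta>2 B' J"
    "I = add_mset A J" "\<Theta> = \<Theta>1 + \<Theta>2" "wf_rterm m" "\<forall>b\<in>#B. wf_rterm b"
    by (auto dest: typed_bag_add_mset_inv)
  moreover from calculation bag_add.IH(1)[of \<Theta>1 A] obtain \<Gamma>1 where "typed \<Gamma>1 m A" "lsub_ctx k ns1 \<Gamma>1 \<Theta>1"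
    by blast
  moreover from calculation bag_add.IH(2)[of \<Theta>2 J] obtain \<Gamma>2 where "typed_bag \<Gamma>2 B J" "lsub_ctx k ns2 \<Gamma>2 \<Theta>2"
    by blast
  ultimately show ?case
    by (intro exI[of _ "\<Gamma>1 + \<Gamma>2"]) (auto intro: lsub_ctx_plus typed_typed_bag.typed_bag_add)
next
  case (der k m ns m')
  show ?case by simp
qed

lemma typed_beta:
  "typed \<Gamma> (rplugL ls (RLam m)) (Arr I A) \<Longrightarrow> typed_bag \<Delta> B I \<Longrightarrow>
     typed (\<Gamma> + \<Delta>) (rplugL ls (RES m (RBag (image_mset (rlift (length ls) 0) B)))) A"
proof (induction ls arbitrary: \<Gamma> \<Delta> B)
  case Nil
  then show ?case
    by (auto simp: typed_RLam_iff intro: typed_es)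
next
  case (Cons l ls)
  from Cons.prems(1) obtain \<Gamma>' \<Delta>' J where \<Gamma>: "\<Gamma> = \<Gamma>' + \<Delta>'"
    "typed (ctx_cons J \<Gamma>') (rplugL ls (RLam m)) (Arr I A)" "typed_arg \<Delta>' l J"
    by (auto simp: typed_RES_iff)
  from Cons.IH[OF \<Gamma>(2) typed_bag_rlift_1_0[OF Cons.prems(2)]]
  have "typed (ctx_cons J (\<Gamma>' + \<Delta>)) (rplugL ls (RES m (RBag (image_mset (rlift (Suc (length ls)) 0) B)))) A"
    by (simp add: ctx_cons_plus)
  moreover have "\<Gamma> + \<Delta> = (\<Gamma>' + \<Delta>) + \<Delta>'"
    using \<Gamma>(1) by (simp add: add_ac)
  ultimately show ?case
    using \<Gamma>(3) unfolding typed_RES_iff rplugL.simps length_Cons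
    by (intro exI[of _ "\<Gamma>' + \<Delta>"] exI[of _ \<Delta>'] exI[of _ J]) simp
qed

lemma typed_beta_inv:
  "typed \<Theta> (rplugL ls (RES m (RBag (image_mset (rlift (length ls) 0) B)))) A \<Longrightarrow>
     \<exists>\<Gamma> \<Delta> I. \<Theta> = \<Gamma> + \<Delta> \<and> typed \<Gamma> (rplugL ls (RLam m)) (Arr I A) \<and> typed_bag \<Delta> B I"
proof (induction ls arbitrary: \<Theta> B)
  case Nil
  then show ?case
    by (auto simp: typed_RES_iff intro: typed_lam)
next
  case (Cons l ls)
  from Cons.prems obtain \<Theta>1 \<Theta>2 J where \<Theta>: "\<Theta> = \<Theta>1 + \<Theta>2" "typed_arg \<Theta>2 l J"
    "typed (ctx_cons J \<Theta>1) (rplugL ls (RES m (RBag (image_mset (rlift (length ls) 0) (image_mset (rlift 1 0) B))))) A"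
    by (auto simp: typed_RES_iff)
  from Cons.IH[OF \<Theta>(3)] obtain \<Gamma> \<Delta>' I where "ctx_cons J \<Theta>1 = \<Gamma> + \<Delta>'"
    "typed \<Gamma> (rplugL ls (RLam m)) (Arr I A)" "typed_bag \<Delta>' (image_mset (rlift 1 0) B) I"
    by blast
  moreover from this(3) obtain \<Delta> where "\<Delta>' = ctx_cons {#} \<Delta>" "typed_bag \<Delta> B I"
    by (blast dest: typed_bag_rlift_1_0_inv)
  ultimately obtain \<Gamma>' where "\<Gamma> = ctx_cons J \<Gamma>'" "\<Theta>1 = \<Gamma>' + \<Delta>"
    by (metis ctx_cons_eq_plus_cons_empty ctx_cons_tl)
  with \<Theta> \<open>typed \<Gamma> (rplugL ls (RLam m)) (Arr I A)\<close> \<open>typed_bag \<Delta> B I\<close> show ?case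
    by (intro exI[of _ "\<Gamma>' + \<Theta>2"] exI[of _ \<Delta>] exI[of _ I]) (auto simp: typed_RES_iff add_ac)
qed

section \<open>Subject reduction and subject expansion\<close>

lemma typed_RES_contract:
  assumes "typed \<Theta> (RES m (rplugL ls (RBag B))) A"
  shows "ls = [] \<and> (\<exists>m'. lsub 0 m B m' \<and> typed \<Theta> m' A)"
proof -
  from assms obtain \<Gamma> \<Delta> I where "ls = []" "\<Theta> = \<Gamma> + \<Delta>" "typed (ctx_cons I \<Gamma>) m A" "typed_bag \<Delta> B I"
    by (auto simp: typed_RES_iff)
  then show ?thesis
    using typed_lsub(1)[of "ctx_cons I \<Gamma>" m A \<Delta> B 0] by auto
qed

text \<open>Linearity of typing is what rules out reductions to zero: the sizes of the bags match the
  numbers of occurrences, and the typing of the bag tells how to distribute it.\<close>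
lemma typed_rstep:
  "rstep a r \<Longrightarrow>
     (typed \<Theta> a A \<longrightarrow> (\<exists>b. rstep a (Some b) \<and> typed \<Theta> b A)) \<and>
     (typed_arg \<Theta> a I \<longrightarrow> (\<exists>b. rstep a (Some b) \<and> typed_arg \<Theta> b I))"
proof (induction arbitrary: \<Theta> A I rule: rstep.induct)
  case (beta ls m n)
  show ?case
  proof (intro conjI impI)
    assume "typed \<Theta> (RApp (rplugL ls (RLam m)) n) A"
    then obtain \<Gamma> \<Delta> B J where "\<Theta> = \<Gamma> + \<Delta>" "n = RBag B"
      "typed \<Gamma> (rplugL ls (RLam m)) (Arr J A)" "typed_bag \<Delta> B J"
      by (auto simp: typed_RApp_iff typed_arg_def)
    then show "\<exists>b. rstep (RApp (rplugL ls (RLam m)) n) (Some b) \<and> typed \<Theta> b A"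
      using rstep.beta[of ls m n] typed_beta by auto
  qed simp
next
  case (subs ls m B m')
  show ?case
    using typed_RES_contract[of \<Theta> m ls B A] rstep_subs_root by fastforce
next
  case (subs_zero m B ls)
  show ?case
    using typed_RES_contract[of \<Theta> m ls B A] rstep_subs_root by fastforce
next
  case (c_lam m r)
  then show ?case
    by (fastforce simp: typed_RLam_iff intro: rstep_in_RLam typed_lam)
next
  case (c_appL m r n)
  then show ?case
    by (fastforce simp: typed_RApp_iff intro: rstep_in_RApp1)
next
  case (c_appR n r m)
  then show ?case
    by (fastforce simp: typed_RApp_iff intro: rstep_in_RApp2)
next
  case (c_esL m r n)
  then show ?case
    by (fastforce simp: typed_RES_iff intro: rstep_in_RES1)
next
  case (c_esR n r m)
  then show ?case
    by (fastforce simp: typed_RES_iff intro: rstep_in_RES2)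
next
  case (c_bag m r B)
  show ?case
  proof (intro conjI impI)
    assume "typed_arg \<Theta> (RBag (add_mset m B)) I"
    then obtain \<Gamma> \<Delta> A J where "typed \<Gamma> m A" "typed_bag \<Delta> B J" "I = add_mset A J" "\<Theta> = \<Gamma> + \<Delta>"
      by (auto dest: typed_bag_add_mset_inv)
    with c_bag.IH show "\<exists>b. rstep (RBag (add_mset m B)) (Some b) \<and> typed_arg \<Theta> b I"
      by (metis rstep_in_RBag typed_arg_simps(1) typed_bag_add)
  qed simp
next
  case (der_one ls m)
  show ?case by simp
next
  case (der_zero B ls)
  show ?case by simp
next
  case (c_der m r)
  show ?case by simp
qed

lemma typed_normalizes: "typed \<Theta> m A \<Longrightarrow> \<exists>p. rred\<^sup>*\<^sup>* m p \<and> rnormal p"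
proof (induction "rsize m" arbitrary: m rule: less_induct)
  case less
  show ?case
  proof (cases "rnormal m")
    case False
    then obtain r where "rstep m r"
      unfolding rnormal_def by blast
    with less.prems obtain m' where "rstep m (Some m')" "typed \<Theta> m' A"
      using typed_rstep by blast
    moreover from this(1) have "rsize m' < rsize m"
      by (rule rsize_rstep_less)
    ultimately obtain p where "rred\<^sup>*\<^sup>* m' p" "rnormal p"
      using less.hyps by blast
    with \<open>rstep m (Some m')\<close> show ?thesis
      by (meson converse_rtranclp_into_rtranclp rred_def)
  qed blast
qed

lemma typed_rstep_expand:
  "rstep a (Some b) \<Longrightarrow>
     (wf_rterm a \<longrightarrow> typed \<Theta> b A \<longrightarrow> typed \<Theta> a A) \<and>
     (wf_bag a \<longrightarrow> typed_arg \<Theta> b I \<longrightarrow> typed_arg \<Theta> a I)"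
proof (induction a "Some b" arbitrary: b \<Theta> A I rule: rstep.induct)
  case (beta ls m n)
  show ?case
  proof (intro conjI impI)
    assume "wf_rterm (RApp (rplugL ls (RLam m)) n)"
      "typed \<Theta> (rplugL ls (RES m (rlift (length ls) 0 n))) A"
    then obtain B where "n = RBag B"
      "typed \<Theta> (rplugL ls (RES m (RBag (image_mset (rlift (length ls) 0) B)))) A"
      by (auto simp: wf_bag_def)
    then show "typed \<Theta> (RApp (rplugL ls (RLam m)) n) A"
      by (auto dest!: typed_beta_inv intro: typed_app)
  qed simp
next
  case (subs ls m B m')
  show ?case
  proof (intro conjI impI)
    assume "wf_rterm (RES m (rplugL ls (RBag B)))" "typed \<Theta> (rplugL ls m') A"
    then have "ls = []" "wf_rterm m" "lsub 0 m B m'" "typed \<Theta> m' A"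
      using subs.hyps by auto
    then obtain \<Gamma> \<Delta> where "typed \<Gamma> m A" "typed_bag \<Delta> B (\<Gamma> 0)" "\<Theta> = ctx_del 0 \<Gamma> + \<Delta>"
      using typed_lsub_inv(1) unfolding lsub_ctx_def by blast
    moreover obtain I \<Gamma>' where "\<Gamma> = ctx_cons I \<Gamma>'"
      by (metis ctx_cons_tl)
    ultimately show "typed \<Theta> (RES m (rplugL ls (RBag B))) A"
      using \<open>ls = []\<close> by (auto intro: typed_es)
  qed simp
next
  case (c_lam m r)
  then show ?case
    by (fastforce simp: typed_RLam_iff intro: typed_lam)
next
  case (c_appL m r n)
  then show ?case
    by (fastforce simp: typed_RApp_iff)
next
  case (c_appR n r m)
  then show ?case
    by (fastforce simp: typed_RApp_iff)
next
  case (c_esL m r n)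
  then show ?case
    by (fastforce simp: typed_RES_iff)
next
  case (c_esR n r m)
  then show ?case
    by (fastforce simp: typed_RES_iff)
next
  case (c_bag m r B)
  show ?case
  proof (intro conjI impI)
    assume "wf_bag (RBag (add_mset m B))" "typed_arg \<Theta> b I"
    moreover obtain m' where "r = Some m'" "b = RBag (add_mset m' B)"
      using c_bag.hyps by auto
    ultimately obtain \<Gamma> \<Delta> A J where "typed \<Gamma> m' A" "typed_bag \<Delta> B J" "I = add_mset A J"
      "\<Theta> = \<Gamma> + \<Delta>" "wf_rterm m"
      by (auto dest: typed_bag_add_mset_inv)
    with c_bag.hyps(2) \<open>r = Some m'\<close> show "typed_arg \<Theta> (RBag (add_mset m B)) I"
      by (auto intro: typed_bag_add)
  qed simp
next
  case (der_one ls m)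
  show ?case by simp
next
  case (c_der m r)
  show ?case by simp
qed

lemma typed_rred_expand: "rred\<^sup>*\<^sup>* a b \<Longrightarrow> wf_rterm a \<Longrightarrow> typed \<Theta> b A \<Longrightarrow> typed \<Theta> a A"
proof (induction rule: converse_rtranclp_induct)
  case (step a a')
  then show ?case
    using typed_rstep_expand wf_rstep unfolding rred_def by blast
qed

text \<open>The second claim, that a normal non-abstraction can be given any type, is the induction
  hypothesis needed for the head of an application.\<close>
lemma typed_rnormal:
  "wf_rterm p \<Longrightarrow> rnormal p \<Longrightarrow>
     (\<exists>\<Theta> A. typed \<Theta> p A) \<and> ((\<nexists>m. p = RLam m) \<longrightarrow> (\<forall>A. \<exists>\<Theta>. typed \<Theta> p A))"
proof (induction rule: wf_rterm.induct)
  case (wf_var x)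
  then show ?case
    by (auto intro: typed_var)
next
  case (wf_lam m)
  then obtain \<Theta> A where "typed \<Theta> m A"
    using rnormal_RLam by blast
  then have "typed (ctx_cons (\<Theta> 0) (\<lambda>i. \<Theta> (Suc i))) m A"
    by (simp add: ctx_cons_tl)
  then show ?case
    by (blast intro: typed_lam)
next
  case (wf_app m B)
  then have "rnormal m" "\<nexists>m'. m = RLam m'" "\<forall>b\<in>#B. rnormal b"
    by (auto dest: rnormal_RApp rnormal_RBag simp: not_rnormal_beta_root)
  with wf_app.IH obtain \<Delta> I where B: "typed_bag \<Delta> B I"
    using typed_bag_of_typed by meson
  have "\<exists>\<Theta>. typed \<Theta> (RApp m (RBag B)) A" for A
  proof -
    from wf_app.IH(1) \<open>rnormal m\<close> \<open>\<nexists>m'. m = RLam m'\<close> obtain \<Gamma> where "typed \<Gamma> m (Arr I A)"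
      by blast
    with B show ?thesis
      by (blast intro: typed_app)
  qed
  then show ?case
    by blast
next
  case (wf_es m B)
  then show ?case
    using not_rnormal_RES by blast
qed

section \<open>The Taylor expansion\<close>

lemma taylor_n_DVar_iff: "taylor_n m (DVar x) \<longleftrightarrow> m = RVar x"
  and taylor_n_DLam_iff: "taylor_n m (DLam M) \<longleftrightarrow> (\<exists>m0. m = RLam m0 \<and> taylor_n m0 M)"
  and taylor_n_DApp_iff: "taylor_n m (DApp M N) \<longleftrightarrow>
    (\<exists>m0 B. m = RApp m0 (RBag B) \<and> taylor_n m0 M \<and> (\<forall>b\<in>#B. taylor_n b N))"
  and taylor_n_DES_iff: "taylor_n m (DES M N) \<longleftrightarrow>
    (\<exists>m0 B. m = RES m0 (RBag B) \<and> taylor_n m0 M \<and> (\<forall>b\<in>#B. taylor_n b N))"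
  by (auto elim: taylor_n.cases intro: taylor_n.intros)

lemma taylor_n_RVar_iff: "taylor_n (RVar x) P \<longleftrightarrow> P = DVar x"
  and taylor_n_RLam_iff: "taylor_n (RLam m) P \<longleftrightarrow> (\<exists>P0. P = DLam P0 \<and> taylor_n m P0)"
  and taylor_n_RApp_iff: "taylor_n (RApp m n) P \<longleftrightarrow>
    (\<exists>P1 P2 B. P = DApp P1 P2 \<and> n = RBag B \<and> taylor_n m P1 \<and> (\<forall>b\<in>#B. taylor_n b P2))"
  and taylor_n_RES_iff: "taylor_n (RES m n) P \<longleftrightarrow>
    (\<exists>P1 P2 B. P = DES P1 P2 \<and> n = RBag B \<and> taylor_n m P1 \<and> (\<forall>b\<in>#B. taylor_n b P2))"
  by (auto elim: taylor_n.cases intro: taylor_n.intros)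

lemma not_taylor_n_RDer [simp]: "\<not> taylor_n (RDer m) P"
  and not_taylor_n_RBag [simp]: "\<not> taylor_n (RBag B) P"
  by (auto elim: taylor_n.cases)

lemma taylor_n_wf: "taylor_n m M \<Longrightarrow> wf_rterm m"
  by (induction rule: taylor_n.induct) auto

lemma taylor_n_rlift: "taylor_n m M \<Longrightarrow> taylor_n (rlift k c m) (dlift k c M)"
  by (induction m M arbitrary: c rule: taylor_n.induct) (auto intro!: taylor_n.intros)

lemma image_mset_choice:
  assumes "\<forall>b\<in>#B. \<exists>a. P a \<and> b = f a"
  obtains A where "\<forall>a\<in>#A. P a" "B = image_mset f A"
proof -
  have "\<exists>A. (\<forall>a\<in>#A. P a) \<and> B = image_mset f A"
    using assms
  proof (induction B)
    case (add b B)
    then obtain A a where "\<forall>a\<in>#A. P a" "B = image_mset f A" "P a" "b = f a"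
      by auto
    then show ?case
      by (intro exI[of _ "add_mset a A"]) auto
  qed simp
  with that show thesis
    by blast
qed

lemma taylor_n_dlift_inv: "taylor_n m' (dlift k c M) \<Longrightarrow> \<exists>m. taylor_n m M \<and> m' = rlift k c m"
proof (induction M arbitrary: m' c)
  case (DVar x)
  then show ?case
    by (auto simp: taylor_n_DVar_iff intro: taylor_n.intros)
next
  case (DLam M)
  from DLam.prems obtain q where "m' = RLam q" "taylor_n q (dlift k (Suc c) M)"
    by (auto simp: taylor_n_DLam_iff)
  moreover from this(2) obtain q0 where "taylor_n q0 M" "q = rlift k (Suc c) q0"
    using DLam.IH by blast
  ultimately show ?case
    by (intro exI[of _ "RLam q0"]) (auto intro: taylor_n.intros)
next
  case (DApp M N)
  from DApp.prems obtain a B' where m': "m' = RApp a (RBag B')" "taylor_n a (dlift k c M)"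
    "\<forall>b\<in>#B'. taylor_n b (dlift k c N)"
    by (auto simp: taylor_n_DApp_iff)
  from m'(2) obtain a0 where a0: "taylor_n a0 M" "a = rlift k c a0"
    using DApp.IH(1) by blast
  have "\<forall>b\<in>#B'. \<exists>b0. taylor_n b0 N \<and> b = rlift k c b0"
    using m'(3) DApp.IH(2) by blast
  then obtain B0 where B0: "\<forall>b\<in>#B0. taylor_n b N" "B' = image_mset (rlift k c) B0"
    by (rule image_mset_choice)
  show ?case
    using m'(1) a0 B0 by (intro exI[of _ "RApp a0 (RBag B0)"]) (auto intro: taylor_n.intros)
next
  case (DES M N)
  from DES.prems obtain a B' where m': "m' = RES a (RBag B')" "taylor_n a (dlift k (Suc c) M)"
    "\<forall>b\<in>#B'. taylor_n b (dlift k c N)"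
    by (auto simp: taylor_n_DES_iff)
  from m'(2) obtain a0 where a0: "taylor_n a0 M" "a = rlift k (Suc c) a0"
    using DES.IH(1) by blast
  have "\<forall>b\<in>#B'. \<exists>b0. taylor_n b0 N \<and> b = rlift k c b0"
    using m'(3) DES.IH(2) by blast
  then obtain B0 where B0: "\<forall>b\<in>#B0. taylor_n b N" "B' = image_mset (rlift k c) B0"
    by (rule image_mset_choice)
  show ?case
    using m'(1) a0 B0 by (intro exI[of _ "RES a0 (RBag B0)"]) (auto intro: taylor_n.intros)
qed

definition taylor_arg :: "rterm \<Rightarrow> dterm \<Rightarrow> bool" where
  "taylor_arg n N \<longleftrightarrow> (\<exists>B. n = RBag B \<and> (\<forall>b\<in>#B. taylor_n b N))"

lemma taylor_arg_RBag [simp]: "taylor_arg (RBag B) N \<longleftrightarrow> (\<forall>b\<in>#B. taylor_n b N)"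
  by (simp add: taylor_arg_def)

lemma taylor_n_lsub:
  "lsub k p ns p' \<Longrightarrow> \<forall>n\<in>#ns. taylor_n n N \<Longrightarrow>
     (taylor_n p P \<longrightarrow> taylor_n p' (dsubst P k N)) \<and>
     (taylor_arg p P \<longrightarrow> taylor_arg p' (dsubst P k N))"
  "lsub_bag k B ns B' \<Longrightarrow> \<forall>n\<in>#ns. taylor_n n N \<Longrightarrow>
     \<forall>b\<in>#B. taylor_n b P \<Longrightarrow> \<forall>b\<in>#B'. taylor_n b (dsubst P k N)"
proof (induction arbitrary: P N and P N rule: lsub_lsub_bag.inducts)
  case (var_eq k n)
  then show ?case
    by (auto simp: taylor_n_RVar_iff taylor_arg_def)
next
  case (var_lt i k)
  then show ?case
    by (auto simp: taylor_n_RVar_iff taylor_arg_def intro: taylor_n.var)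
next
  case (var_gt i k)
  then show ?case
    by (auto simp: taylor_n_RVar_iff taylor_arg_def intro: taylor_n.var)
next
  case (lam k m ns m')
  have "\<forall>n\<in>#image_mset (rlift 1 0) ns. taylor_n n (dlift 1 0 N)"
    using lam.prems by (auto intro: taylor_n_rlift)
  with lam.IH show ?case
    by (auto simp: taylor_n_RLam_iff taylor_arg_def intro: taylor_n.lam)
next
  case (app k m ns1 m' n ns2 n')
  have "taylor_n m P1 \<longrightarrow> taylor_n m' (dsubst P1 k N)"
    and "taylor_arg n P2 \<longrightarrow> taylor_arg n' (dsubst P2 k N)" for P1 P2
    using app.IH app.prems by auto
  then show ?case
    by (auto simp: taylor_n_RApp_iff taylor_arg_def)
next
  case (es k m ns1 m' n ns2 n')
  have "\<forall>n\<in>#image_mset (rlift 1 0) ns1. taylor_n n (dlift 1 0 N)"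
    using es.prems by (auto intro: taylor_n_rlift)
  then have "taylor_n m P1 \<longrightarrow> taylor_n m' (dsubst P1 (Suc k) (dlift 1 0 N))"
    and "taylor_arg n P2 \<longrightarrow> taylor_arg n' (dsubst P2 k N)" for P1 P2
    using es.IH es.prems by auto
  then show ?case
    by (auto simp: taylor_n_RES_iff taylor_arg_def)
next
  case (der k m ns m')
  show ?case
    by (simp add: taylor_arg_def)
next
  case (bag k B ns B')
  then show ?case
    by (simp add: taylor_arg_def)
next
  case (bag_empty k)
  then show ?case
    by simp
next
  case (bag_add k m ns1 m' B ns2 B')
  have "taylor_n m' (dsubst P k N)" "\<forall>b\<in>#B'. taylor_n b (dsubst P k N)"
    using bag_add.IH bag_add.prems by simp_all
  then show ?case
    by simp
qed

lemma lsub_bag_collect: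
  assumes "\<forall>b\<in>#B'. \<exists>p ns. taylor_n p P \<and> (\<forall>n\<in>#ns. taylor_n n N) \<and> lsub k p ns b"
  obtains B ns where "\<forall>p\<in>#B. taylor_n p P" "\<forall>n\<in>#ns. taylor_n n N" "lsub_bag k B ns B'"
proof -
  have "\<exists>B ns. (\<forall>p\<in>#B. taylor_n p P) \<and> (\<forall>n\<in>#ns. taylor_n n N) \<and> lsub_bag k B ns B'"
    using assms
  proof (induction B')
    case empty
    show ?case
      by (intro exI[of _ "{#}"]) (simp add: lsub_lsub_bag.bag_empty)
  next
    case (add b B')
    have "\<forall>b\<in>#B'. \<exists>p ns. taylor_n p P \<and> (\<forall>n\<in>#ns. taylor_n n N) \<and> lsub k p ns b"
      using add.prems by simp
    then obtain B ns where "\<forall>p\<in>#B. taylor_n p P" "\<forall>n\<in>#ns. taylor_n n N" "lsub_bag k B ns B'"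
      using add.IH by blast
    moreover obtain p ns1 where "taylor_n p P" "\<forall>n\<in>#ns1. taylor_n n N" "lsub k p ns1 b"
      using add.prems by auto
    ultimately show ?case
      by (intro exI[of _ "add_mset p B"] exI[of _ "ns1 + ns"]) (auto intro: lsub_lsub_bag.bag_add)
  qed
  with that show thesis
    by blast
qed

lemma taylor_n_dsubst_DVar_inv:
  assumes "taylor_n m' (dsubst (DVar i) k N)"
  shows "\<exists>p ns. taylor_n p (DVar i) \<and> (\<forall>n\<in>#ns. taylor_n n N) \<and> lsub k p ns m'"
proof -
  consider "i = k" | "i < k" | "k < i"
    by linarith
  then show ?thesis
  proof cases
    case 1
    with assms show ?thesis
      by (intro exI[of _ "RVar k"] exI[of _ "{#m'#}"]) (auto intro: taylor_n.var lsub_lsub_bag.var_eq)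
  next
    case 2
    with assms show ?thesis
      by (intro exI[of _ "RVar i"] exI[of _ "{#}"])
        (auto simp: taylor_n_DVar_iff intro: taylor_n.var lsub_lsub_bag.var_lt)
  next
    case 3
    with assms show ?thesis
      using lsub_lsub_bag.var_gt[of k i]
      by (intro exI[of _ "RVar i"] exI[of _ "{#}"]) (auto simp: taylor_n_DVar_iff intro: taylor_n.var)
  qed
qed

lemma taylor_n_dsubst_inv:
  "taylor_n m' (dsubst P k N) \<Longrightarrow> \<exists>p ns. taylor_n p P \<and> (\<forall>n\<in>#ns. taylor_n n N) \<and> lsub k p ns m'"
proof (induction P arbitrary: k N m')
  case (DVar i)
  then show ?case
    by (rule taylor_n_dsubst_DVar_inv)
next
  case (DLam P)
  from DLam.prems obtain q where q: "m' = RLam q" "taylor_n q (dsubst P (Suc k) (dlift 1 0 N))"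
    by (auto simp: taylor_n_DLam_iff)
  from q(2) obtain p ns' where p: "taylor_n p P" "\<forall>n\<in>#ns'. taylor_n n (dlift 1 0 N)"
    "lsub (Suc k) p ns' q"
    using DLam.IH by blast
  from p(2) have "\<forall>n\<in>#ns'. \<exists>n0. taylor_n n0 N \<and> n = rlift 1 0 n0"
    by (blast dest: taylor_n_dlift_inv)
  then obtain ns where "\<forall>n\<in>#ns. taylor_n n N" "ns' = image_mset (rlift 1 0) ns"
    by (rule image_mset_choice)
  with p q(1) show ?case
    by (intro exI[of _ "RLam p"] exI[of _ ns]) (auto intro: taylor_n.lam lsub_lsub_bag.lam)
next
  case (DApp P1 P2)
  from DApp.prems obtain a B' where m': "m' = RApp a (RBag B')" "taylor_n a (dsubst P1 k N)"
    "\<forall>b\<in>#B'. taylor_n b (dsubst P2 k N)"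
    by (auto simp: taylor_n_DApp_iff)
  from m'(2) obtain p1 ns1 where p1: "taylor_n p1 P1" "\<forall>n\<in>#ns1. taylor_n n N" "lsub k p1 ns1 a"
    using DApp.IH(1) by blast
  from m'(3) have "\<forall>b\<in>#B'. \<exists>p ns. taylor_n p P2 \<and> (\<forall>n\<in>#ns. taylor_n n N) \<and> lsub k p ns b"
    using DApp.IH(2) by blast
  then obtain B ns2 where B: "\<forall>p\<in>#B. taylor_n p P2" "\<forall>n\<in>#ns2. taylor_n n N" "lsub_bag k B ns2 B'"
    by (rule lsub_bag_collect)
  from m'(1) p1 B show ?case
    by (intro exI[of _ "RApp p1 (RBag B)"] exI[of _ "ns1 + ns2"])
      (auto intro: taylor_n.app lsub_lsub_bag.app lsub_lsub_bag.bag)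
next
  case (DES P1 P2)
  from DES.prems obtain a B' where m': "m' = RES a (RBag B')"
    "taylor_n a (dsubst P1 (Suc k) (dlift 1 0 N))" "\<forall>b\<in>#B'. taylor_n b (dsubst P2 k N)"
    by (auto simp: taylor_n_DES_iff)
  from m'(2) obtain p1 ns1' where p1: "taylor_n p1 P1" "\<forall>n\<in>#ns1'. taylor_n n (dlift 1 0 N)"
    "lsub (Suc k) p1 ns1' a"
    using DES.IH(1) by blast
  from p1(2) have "\<forall>n\<in>#ns1'. \<exists>n0. taylor_n n0 N \<and> n = rlift 1 0 n0"
    by (blast dest: taylor_n_dlift_inv)
  then obtain ns1 where ns1: "\<forall>n\<in>#ns1. taylor_n n N" "ns1' = image_mset (rlift 1 0) ns1"
    by (rule image_mset_choice)
  from m'(3) have "\<forall>b\<in>#B'. \<exists>p ns. taylor_n p P2 \<and> (\<forall>n\<in>#ns. taylor_n n N) \<and> lsub k p ns b"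
    using DES.IH(2) by blast
  then obtain B ns2 where B: "\<forall>p\<in>#B. taylor_n p P2" "\<forall>n\<in>#ns2. taylor_n n N" "lsub_bag k B ns2 B'"
    by (rule lsub_bag_collect)
  from m'(1) p1 ns1 B show ?case
    by (intro exI[of _ "RES p1 (RBag B)"] exI[of _ "ns1 + ns2"])
      (auto intro: taylor_n.es lsub_lsub_bag.es lsub_lsub_bag.bag)
qed

lemma taylor_n_dplugL:
  "list_all2 taylor_arg ls Ls \<Longrightarrow> taylor_n x X \<Longrightarrow> taylor_n (rplugL ls x) (dplugL Ls X)"
  by (induction ls Ls rule: list_all2_induct) (auto simp: taylor_arg_def intro: taylor_n.es)

lemma taylor_n_dplugL_inv:
  "taylor_n m (dplugL Ls X) \<Longrightarrow> \<exists>ls x. m = rplugL ls x \<and> list_all2 taylor_arg ls Ls \<and> taylor_n x X"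
proof (induction Ls arbitrary: m)
  case Nil
  then show ?case
    by (intro exI[of _ "[]"] exI[of _ m]) simp
next
  case (Cons L Ls)
  then obtain a B where "m = RES a (RBag B)" "taylor_n a (dplugL Ls X)" "\<forall>b\<in>#B. taylor_n b L"
    by (auto simp: taylor_n_DES_iff)
  with Cons.IH show ?case
    by (metis list_all2_Cons rplugL.simps(2) taylor_arg_RBag)
qed

lemma rred_bag_collect:
  assumes "\<forall>b'\<in>#B'. \<exists>b. taylor_n b N \<and> rred\<^sup>*\<^sup>* b b'"
  obtains B where "\<forall>b\<in>#B. taylor_n b N" "rred\<^sup>*\<^sup>* (RBag B) (RBag B')"
proof -
  have "\<exists>B. (\<forall>b\<in>#B. taylor_n b N) \<and> (\<forall>C. rred\<^sup>*\<^sup>* (RBag (B + C)) (RBag (B' + C)))"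
    using assms
  proof (induction B')
    case empty
    show ?case
      by (intro exI[of _ "{#}"]) simp
  next
    case (add b' B')
    have "\<forall>b'\<in>#B'. \<exists>b. taylor_n b N \<and> rred\<^sup>*\<^sup>* b b'"
      using add.prems by simp
    then obtain B where B: "\<forall>b\<in>#B. taylor_n b N" "\<forall>C. rred\<^sup>*\<^sup>* (RBag (B + C)) (RBag (B' + C))"
      using add.IH by blast
    obtain b where b: "taylor_n b N" "rred\<^sup>*\<^sup>* b b'"
      using add.prems by auto
    have "rred\<^sup>*\<^sup>* (RBag (add_mset b B + C)) (RBag (add_mset b' B' + C))" for C
    proof -
      have "rred\<^sup>*\<^sup>* (RBag (add_mset b (B + C))) (RBag (add_mset b' (B + C)))"
        using b(2) by (rule rred_in_RBag)
      also have "rred\<^sup>*\<^sup>* (RBag (add_mset b' (B + C))) (RBag (add_mset b' (B' + C)))"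
        using B(2)[rule_format, of "add_mset b' C"] by simp
      finally show ?thesis
        by simp
    qed
    with B(1) b(1) show ?case
      by (intro exI[of _ "add_mset b B"]) simp
  qed
  then show thesis
    using that by (metis add_0_right)
qed

lemma taylor_n_nstep_expand: "nstep M M' \<Longrightarrow> taylor_n m' M' \<Longrightarrow> \<exists>m. taylor_n m M \<and> rred\<^sup>*\<^sup>* m m'"
proof (induction arbitrary: m' rule: nstep.induct)
  case (dB Ls M N)
  then obtain ls p B' where m': "m' = rplugL ls (RES p (RBag B'))" "list_all2 taylor_arg ls Ls"
    "taylor_n p M" "\<forall>b\<in>#B'. taylor_n b (dlift (length Ls) 0 N)"
    by (auto dest!: taylor_n_dplugL_inv simp: taylor_n_DES_iff)
  from m'(4) have "\<forall>b\<in>#B'. \<exists>b0. taylor_n b0 N \<and> b = rlift (length Ls) 0 b0"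
    by (blast dest: taylor_n_dlift_inv)
  then obtain B where B: "\<forall>b\<in>#B. taylor_n b N" "B' = image_mset (rlift (length Ls) 0) B"
    by (rule image_mset_choice)
  have "taylor_n (RApp (rplugL ls (RLam p)) (RBag B)) (DApp (dplugL Ls (DLam M)) N)"
    using m'(2,3) B(1) by (auto intro: taylor_n.app taylor_n.lam taylor_n_dplugL)
  moreover have "rred (RApp (rplugL ls (RLam p)) (RBag B)) m'"
    using rstep.beta[of ls p "RBag B"] m'(1,2) B(2) by (simp add: rred_def list_all2_lengthD)
  ultimately show ?case
    by blast
next
  case (ls M N)
  then obtain p ns where "taylor_n p M" "\<forall>n\<in>#ns. taylor_n n N" "lsub 0 p ns m'"
    by (blast dest: taylor_n_dsubst_inv)
  then show ?case
    by (blast intro: taylor_n.es rstep_subs_root[unfolded rred_def[symmetric]])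
next
  case (lam M M')
  then show ?case
    by (fastforce simp: taylor_n_DLam_iff intro: taylor_n.lam rred_in_RLam)
next
  case (appL M M' N)
  then show ?case
    by (fastforce simp: taylor_n_DApp_iff intro: taylor_n.app rred_in_RApp1)
next
  case (appR N N' M)
  from appR.prems obtain a B where m': "m' = RApp a (RBag B)" "taylor_n a M" "\<forall>b\<in>#B. taylor_n b N'"
    by (auto simp: taylor_n_DApp_iff)
  from m'(3) appR.IH obtain B0 where "\<forall>b\<in>#B0. taylor_n b N" "rred\<^sup>*\<^sup>* (RBag B0) (RBag B)"
    by (metis rred_bag_collect)
  with m'(1,2) show ?case
    by (blast intro: taylor_n.app rred_in_RApp2)
next
  case (esL M M' N)
  then show ?case
    by (fastforce simp: taylor_n_DES_iff intro: taylor_n.es rred_in_RES1)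
next
  case (esR N N' M)
  from esR.prems obtain a B where m': "m' = RES a (RBag B)" "taylor_n a M" "\<forall>b\<in>#B. taylor_n b N'"
    by (auto simp: taylor_n_DES_iff)
  from m'(3) esR.IH obtain B0 where "\<forall>b\<in>#B0. taylor_n b N" "rred\<^sup>*\<^sup>* (RBag B0) (RBag B)"
    by (metis rred_bag_collect)
  with m'(1,2) show ?case
    by (blast intro: taylor_n.es rred_in_RES2)
qed

section \<open>Head reduction and meaningfulness\<close>

lemma dlift_0 [simp]: "dlift 0 c M = M"
  by (induction M arbitrary: c) auto

lemma nstep_tplug: "nstep M M' \<Longrightarrow> nstep (tplug T M) (tplug T M')"
  by (induction T) (auto intro: nstep.intros)

lemma nsteps_tplug: "nstep\<^sup>*\<^sup>* M M' \<Longrightarrow> nstep\<^sup>*\<^sup>* (tplug T M) (tplug T M')"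
  by (erule rtranclp_map) (rule nstep_tplug)

lemma meaningful_nsteps_expand: "nstep\<^sup>*\<^sup>* M M' \<Longrightarrow> dCBN_meaningful M' \<Longrightarrow> dCBN_meaningful M"
  unfolding dCBN_meaningful_def by (metis nsteps_tplug rtranclp_trans)

primrec tctx_comp :: "tctx \<Rightarrow> tctx \<Rightarrow> tctx" where
  "tctx_comp THole S = S"
| "tctx_comp (TApp T N) S = TApp (tctx_comp T S) N"
| "tctx_comp (TLamApp T N) S = TLamApp (tctx_comp T S) N"

lemma tplug_tctx_comp: "tplug (tctx_comp T S) M = tplug T (tplug S M)"
  by (induction T) auto

lemma meaningful_tplug: "dCBN_meaningful (tplug S M) \<Longrightarrow> dCBN_meaningful M"
  unfolding dCBN_meaningful_def by (metis tplug_tctx_comp)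

lemma nstep_beta_root: "nstep (DApp (DLam M) N) (DES M N)"
  using nstep.dB[of "[]" M N] by simp

lemma nsteps_beta_subst: "nstep\<^sup>*\<^sup>* (DApp (DLam M) N) (dsubst M 0 N)"
  using nstep_beta_root[of M N] nstep.ls[of M N] by auto

lemma meaningful_dsubst_0: "dCBN_meaningful (dsubst M 0 N) \<Longrightarrow> dCBN_meaningful M"
  using meaningful_nsteps_expand[OF nsteps_beta_subst] meaningful_tplug[of "TLamApp THole N" M]
  by simp

lemma meaningful_DLam: "dCBN_meaningful (dsubst M 0 N) \<Longrightarrow> dCBN_meaningful (DLam M)"
  using meaningful_nsteps_expand[OF nsteps_beta_subst] meaningful_tplug[of "TApp THole N" "DLam M"]
  by simp

definition lams :: "nat \<Rightarrow> dterm \<Rightarrow> dterm" where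
  "lams n M = (DLam ^^ n) M"

definition apps :: "dterm \<Rightarrow> dterm list \<Rightarrow> dterm" where
  "apps H Ns = foldl DApp H Ns"

lemma lams_0 [simp]: "lams 0 M = M"
  and lams_Suc [simp]: "lams (Suc n) M = DLam (lams n M)"
  by (simp_all add: lams_def)

lemma apps_Nil [simp]: "apps H [] = H"
  and apps_Cons [simp]: "apps H (N # Ns) = apps (DApp H N) Ns"
  and apps_snoc: "apps H (Ns @ [N]) = DApp (apps H Ns) N"
  by (simp_all add: apps_def)

lemma dsubst_lams: "dsubst (lams n M) k N = lams n (dsubst M (k + n) ((dlift 1 0 ^^ n) N))"
  by (induction n arbitrary: k N) (simp_all add: funpow_Suc_right del: funpow.simps)

lemma dsubst_apps: "dsubst (apps H Ns) k N = apps (dsubst H k N) (map (\<lambda>M. dsubst M k N) Ns)"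
  by (induction Ns arbitrary: H) auto

lemma dlift_lams: "dlift a c (lams n M) = lams n (dlift a (c + n) M)"
  by (induction n arbitrary: c) auto

lemma nsteps_apps: "nstep\<^sup>*\<^sup>* M M' \<Longrightarrow> nstep\<^sup>*\<^sup>* (apps M Ns) (apps M' Ns)"
proof (induction Ns arbitrary: M M')
  case (Cons N Ns)
  have "nstep\<^sup>*\<^sup>* (DApp M N) (DApp M' N)"
    using Cons.prems by (rule rtranclp_map[where f = "\<lambda>M. DApp M N"]) (rule nstep.appL)
  then show ?case
    using Cons.IH by simp
qed simp

definition erase_id :: "nat \<Rightarrow> dterm" where
  "erase_id k = lams (Suc k) (DVar 0)"

lemma erase_id_Suc: "erase_id (Suc k) = DLam (erase_id k)"
  by (simp add: erase_id_def)

lemma dsubst_erase_id [simp]: "dsubst (erase_id k) j N = erase_id k"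
  unfolding erase_id_def by (simp only: dsubst_lams) simp

lemma dlift_erase_id [simp]: "dlift a c (erase_id k) = erase_id k"
  unfolding erase_id_def by (simp only: dlift_lams) simp

lemma funpow_dlift_erase_id [simp]: "(dlift a c ^^ n) (erase_id k) = erase_id k"
  by (induction n) auto

lemma nsteps_apps_erase_id: "nstep\<^sup>*\<^sup>* (apps (erase_id (length Ns)) Ns) (DLam (DVar 0))"
proof (induction Ns)
  case (Cons N Ns)
  have "nstep\<^sup>*\<^sup>* (DApp (erase_id (Suc (length Ns))) N) (erase_id (length Ns))"
    using nsteps_beta_subst[of "erase_id (length Ns)" N] by (simp add: erase_id_Suc)
  then have "nstep\<^sup>*\<^sup>* (apps (erase_id (length (N # Ns))) (N # Ns)) (apps (erase_id (length Ns)) Ns)"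
    by (simp add: nsteps_apps)
  then show ?case
    using Cons.IH by (rule rtranclp_trans)
qed (simp add: erase_id_def)

lemma meaningful_lams_Suc:
  "dCBN_meaningful (lams n (dsubst M n (erase_id k))) \<Longrightarrow> dCBN_meaningful (lams (Suc n) M)"
  using meaningful_DLam[of "lams n M" "erase_id k"] by (simp add: dsubst_lams)

lemma meaningful_lams_apps_erase_id: "dCBN_meaningful (lams n (apps (erase_id (length Ns)) Ns))"
proof (induction n arbitrary: Ns)
  case 0
  show ?case
    unfolding dCBN_meaningful_def using nsteps_apps_erase_id[of Ns] by (metis lams_0 tplug.simps(1))
next
  case (Suc n)
  then show ?case
    using Suc.IH[of "map (\<lambda>M. dsubst M n (erase_id 0)) Ns"]
    by (intro meaningful_lams_Suc[where k = 0]) (simp add: dsubst_apps)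
qed

text \<open>The testing context substitutes \<open>erase_id\<close> for the binders, and for the free
  variables, one at a time; \<open>n + j\<close> decreases until the head becomes \<open>erase_id\<close>.\<close>
lemma meaningful_head_normal: "dCBN_meaningful (lams n (apps (DVar j) Ns))"
proof (induction "n + j" arbitrary: n j Ns rule: less_induct)
  case less
  define i where "i = n - 1"
  define Ns' where "Ns' = map (\<lambda>M. dsubst M i (erase_id (length Ns))) Ns"
  have "dCBN_meaningful (lams (n - 1) (apps (dsubst (DVar j) i (erase_id (length Ns))) Ns'))"
  proof -
    consider "j < i" | "j = i" | "i < j"
      by linarith
    then show ?thesis
    proof cases
      case 1
      then show ?thesis
        using less.hyps[of "n - 1" j Ns'] unfolding i_def by simp
    next
      case 2
      then show ?thesis
        using meaningful_lams_apps_erase_id[of "n - 1" Ns'] unfolding Ns'_def by simp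
    next
      case 3
      then show ?thesis
        using less.hyps[of "n - 1" "j - 1" Ns'] unfolding i_def by simp
    qed
  qed
  then show ?case
  proof (cases n)
    case 0
    with \<open>dCBN_meaningful _\<close> show ?thesis
      unfolding i_def Ns'_def by (auto simp: dsubst_apps intro: meaningful_dsubst_0)
  next
    case (Suc n')
    with \<open>dCBN_meaningful _\<close> have "dCBN_meaningful (lams (Suc n') (apps (DVar j) Ns))"
      unfolding i_def Ns'_def
      by (intro meaningful_lams_Suc[where k = "length Ns"]) (simp add: dsubst_apps)
    with Suc show ?thesis
      by simp
  qed
qed

inductive head_step :: "dterm \<Rightarrow> dterm \<Rightarrow> bool" where
  head_beta: "head_step (DApp (DLam M) N) (DES M N)"
| head_subst: "head_step (DES M N) (dsubst M 0 N)"
| head_lam: "head_step M M' \<Longrightarrow> head_step (DLam M) (DLam M')"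
| head_app: "head_step M M' \<Longrightarrow> head_step (DApp M N) (DApp M' N)"

lemma head_step_nstep: "head_step M M' \<Longrightarrow> nstep M M'"
  by (induction rule: head_step.induct) (auto intro: nstep_beta_root nstep.intros)

lemma head_normal_or_step: "(\<exists>n j Ns. M = lams n (apps (DVar j) Ns)) \<or> (\<exists>M'. head_step M M')"
proof (induction M)
  case (DVar x)
  have "DVar x = lams 0 (apps (DVar x) [])"
    by simp
  then show ?case
    by blast
next
  case (DLam M)
  then show ?case
    by (metis head_lam lams_Suc)
next
  case (DApp M N)
  from DApp.IH(1) show ?case
  proof
    assume "\<exists>n j Ns. M = lams n (apps (DVar j) Ns)"
    then obtain n j Ns where M: "M = lams n (apps (DVar j) Ns)"
      by blast
    show ?case
    proof (cases n)
      case 0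
      with M have "DApp M N = lams 0 (apps (DVar j) (Ns @ [N]))"
        by (simp add: apps_snoc)
      then show ?thesis
        by blast
    next
      case (Suc n')
      with M have "head_step (DApp M N) (DES (lams n' (apps (DVar j) Ns)) N)"
        by (simp add: head_beta)
      then show ?thesis
        by blast
    qed
  qed (blast intro: head_app)
next
  case (DES M N)
  then show ?case
    by (blast intro: head_subst)
qed

lemma head_step_simulation:
  "head_step M M' \<Longrightarrow> taylor_n m M \<Longrightarrow> typed \<Theta> m A \<Longrightarrow>
     \<exists>m'. taylor_n m' M' \<and> typed \<Theta> m' A \<and> rstep m (Some m')"
proof (induction arbitrary: m \<Theta> A rule: head_step.induct)
  case (head_beta M N)
  then obtain p B where "m = RApp (RLam p) (RBag B)" "taylor_n p M" "\<forall>b\<in>#B. taylor_n b N"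
    by (auto simp: taylor_n_DApp_iff taylor_n_DLam_iff)
  with head_beta.prems(2) show ?case
    by (auto simp: typed_RApp_iff typed_RLam_iff typed_arg_def
      intro!: exI[of _ "RES p (RBag B)"] taylor_n.es typed_es rstep_beta_root)
next
  case (head_subst M N)
  then obtain p B where m: "m = RES p (RBag B)" "taylor_n p M" "\<forall>b\<in>#B. taylor_n b N"
    by (auto simp: taylor_n_DES_iff)
  with head_subst.prems(2) obtain m' where "lsub 0 p B m'" "typed \<Theta> m' A"
    using typed_RES_contract[of \<Theta> p "[]" B A] by auto
  with m show ?case
    using taylor_n_lsub(1) by (blast intro: rstep_subs_root)
next
  case (head_lam M M')
  then show ?case
    by (fastforce simp: taylor_n_DLam_iff typed_RLam_iff intro: taylor_n.lam typed_lam rstep_in_RLam)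
next
  case (head_app M M' N)
  then show ?case
    by (fastforce simp: taylor_n_DApp_iff typed_RApp_iff intro: taylor_n.app rstep_in_RApp1)
qed

lemma typed_taylor_meaningful: "taylor_n m M \<Longrightarrow> typed \<Theta> m A \<Longrightarrow> dCBN_meaningful M"
proof (induction "rsize m" arbitrary: m M rule: less_induct)
  case less
  from head_normal_or_step[of M] show ?case
  proof
    assume "\<exists>M'. head_step M M'"
    then obtain M' m' where "head_step M M'" "taylor_n m' M'" "typed \<Theta> m' A" "rstep m (Some m')"
      using head_step_simulation less.prems by blast
    moreover from this(4) have "rsize m' < rsize m"
      by (rule rsize_rstep_less)
    ultimately show ?thesis
      using less.hyps meaningful_nsteps_expand head_step_nstep by blast
  qed (auto intro: meaningful_head_normal)
qed

definition taylor_typable :: "dterm \<Rightarrow> bool" where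
  "taylor_typable M \<longleftrightarrow> (\<exists>m \<Theta> A. taylor_n m M \<and> typed \<Theta> m A)"

lemma nf_set_Taylor_n_nonempty_iff: "nf_set (Taylor_n M) \<noteq> {} \<longleftrightarrow> taylor_typable M"
proof
  assume "nf_set (Taylor_n M) \<noteq> {}"
  then obtain m p where "taylor_n m M" "rred\<^sup>*\<^sup>* m p" "rnormal p"
    by (auto simp: nf_set_def Taylor_n_def)
  moreover from calculation have "wf_rterm m" "wf_rterm p"
    using taylor_n_wf wf_rred by blast+
  ultimately show "taylor_typable M"
    unfolding taylor_typable_def by (meson typed_rnormal typed_rred_expand)
next
  assume "taylor_typable M"
  then show "nf_set (Taylor_n M) \<noteq> {}"
    unfolding taylor_typable_def nf_set_def Taylor_n_def by (blast dest: typed_normalizes)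
qed

lemma taylor_typable_nsteps_expand: "nstep\<^sup>*\<^sup>* M M' \<Longrightarrow> taylor_typable M' \<Longrightarrow> taylor_typable M"
proof (induction rule: converse_rtranclp_induct)
  case (step M M'')
  then obtain m' \<Theta> A where "taylor_n m' M''" "typed \<Theta> m' A"
    by (auto simp: taylor_typable_def)
  moreover from step.hyps(1) this(1) obtain m where "taylor_n m M" "rred\<^sup>*\<^sup>* m m'"
    by (blast dest: taylor_n_nstep_expand)
  ultimately show ?case
    unfolding taylor_typable_def by (blast dest: taylor_n_wf typed_rred_expand)
qed

lemma taylor_typable_DApp: "taylor_typable (DApp M N) \<Longrightarrow> taylor_typable M"
  by (fastforce simp: taylor_typable_def taylor_n_DApp_iff typed_RApp_iff)

lemma taylor_typable_DLam: "taylor_typable (DLam M) \<Longrightarrow> taylor_typable M"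
  by (fastforce simp: taylor_typable_def taylor_n_DLam_iff typed_RLam_iff)

lemma taylor_typable_tplug: "taylor_typable (tplug T M) \<Longrightarrow> taylor_typable M"
  by (induction T) (auto dest: taylor_typable_DApp taylor_typable_DLam)

lemma taylor_typable_id: "taylor_typable (DLam (DVar 0))"
proof -
  have "ctx_cons {#Atom#} 0 = ctx_single 0 Atom"
    by (rule ext) (simp add: ctx_cons_def ctx_single_def zero_fun_apply split: nat.splits)
  then have "typed 0 (RLam (RVar 0)) (Arr {#Atom#} Atom)"
    by (metis typed_lam typed_var)
  then show ?thesis
    unfolding taylor_typable_def by (blast intro: taylor_n.var taylor_n.lam)
qed

theorem mainTheorem12:
  fixes M :: dterm
  shows "dCBN_meaningful M \<longleftrightarrow> nf_set (Taylor_n M) \<noteq> {}"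
proof
  assume "dCBN_meaningful M"
  then obtain T where "nstep\<^sup>*\<^sup>* (tplug T M) (DLam (DVar 0))"
    by (auto simp: dCBN_meaningful_def)
  then have "taylor_typable (tplug T M)"
    using taylor_typable_id by (rule taylor_typable_nsteps_expand)
  then show "nf_set (Taylor_n M) \<noteq> {}"
    by (simp add: nf_set_Taylor_n_nonempty_iff taylor_typable_tplug)
next
  assume "nf_set (Taylor_n M) \<noteq> {}"
  then show "dCBN_meaningful M"
    by (auto simp: nf_set_Taylor_n_nonempty_iff taylor_typable_def intro: typed_taylor_meaningful)
qed

end
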